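(* Let $k$ be a field, $R=k[x_i\mid i\in\mathbb N]$ the commutative polynomial ring in countably many variables, and $M=\bigoplus_{i\in\mathbb N}R[\tfrac1{x_i}]$. Then $M$ is fp-faithfully flat but not faithfully flat; indeed $(R/\mathfrak m)\otimes_RM=0$ for $\mathfrak m=\langle x_i\mid i\in\mathbb N\rangle$.
   Context: An $R$-module $M$ is flat if $-\otimes_RM$ is exact, faithfully flat if it is flat and $-\otimes_RM$ is faithful on all $R$-modules, and fp-faithfully flat if it is flat and $-\otimes_RM$ restricted to finitely presented $R$-modules is a faithful functor to $\mathbf{Ab}$. $R[\tfrac1{x_i}]$ is the localization of $R$ at $x_i$. *)

theory Defs
  imports "HOL-Algebra.Algebra" "HOL-Library.Poly_Mapping"
          "HOL-Computational_Algebra.Fraction_Field"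
begin

definition mod_hom :: "('r, 'x) ring_scheme \<Rightarrow> ('r, 'a) module \<Rightarrow> ('r, 'b) module \<Rightarrow> ('a \<Rightarrow> 'b) \<Rightarrow> bool" where
  "mod_hom R N N' f \<longleftrightarrow> f \<in> carrier N \<rightarrow> carrier N' \<and>
     (\<forall>x\<in>carrier N. \<forall>y\<in>carrier N. f (x \<oplus>\<^bsub>N\<^esub> y) = f x \<oplus>\<^bsub>N'\<^esub> f y) \<and>
     (\<forall>r\<in>carrier R. \<forall>x\<in>carrier N. f (r \<odot>\<^bsub>N\<^esub> x) = r \<odot>\<^bsub>N'\<^esub> f x)"

definition exact_at :: "('r, 'a) module \<Rightarrow> ('r, 'b) module \<Rightarrow> ('r, 'c) module \<Rightarrow> ('a \<Rightarrow> 'b) \<Rightarrow> ('b \<Rightarrow> 'c) \<Rightarrow> bool" where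
  "exact_at N1 N2 N3 f g \<longleftrightarrow> f ` carrier N1 = {y \<in> carrier N2. g y = \<zero>\<^bsub>N3\<^esub>}"

text \<open>Tensor product N \<otimes>_R M as an abelian group: formal Z-linear combinations
  of pairs (n,m) in carrier N \<times> carrier M, modulo the subgroup generated by the
  bilinearity/balancing relators.\<close>
definition formal_sums :: "('r, 'a) module \<Rightarrow> ('r, 'b) module \<Rightarrow> (('a \<times> 'b) \<Rightarrow>\<^sub>0 int) set" where
  "formal_sums N M = {\<phi>. Poly_Mapping.keys \<phi> \<subseteq> carrier N \<times> carrier M}"

definition tensor_relators :: "('r, 'x) ring_scheme \<Rightarrow> ('r, 'a) module \<Rightarrow> ('r, 'b) module \<Rightarrow> (('a \<times> 'b) \<Rightarrow>\<^sub>0 int) set" where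
  "tensor_relators R N M =
     {Poly_Mapping.single (n \<oplus>\<^bsub>N\<^esub> n', m) 1 - Poly_Mapping.single (n, m) 1 - Poly_Mapping.single (n', m) 1
        | n n' m. n \<in> carrier N \<and> n' \<in> carrier N \<and> m \<in> carrier M}
   \<union> {Poly_Mapping.single (n, m \<oplus>\<^bsub>M\<^esub> m') 1 - Poly_Mapping.single (n, m) 1 - Poly_Mapping.single (n, m') 1
        | n m m'. n \<in> carrier N \<and> m \<in> carrier M \<and> m' \<in> carrier M}
   \<union> {Poly_Mapping.single (r \<odot>\<^bsub>N\<^esub> n, m) 1 - Poly_Mapping.single (n, r \<odot>\<^bsub>M\<^esub> m) 1
        | r n m. r \<in> carrier R \<and> n \<in> carrier N \<and> m \<in> carrier M}"

text \<open>The subgroup generated by the relators; a formal sum represents 0 in N \<otimes>_R M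
  iff it lies in this subgroup.\<close>
inductive_set tensor_rel :: "('r, 'x) ring_scheme \<Rightarrow> ('r, 'a) module \<Rightarrow> ('r, 'b) module \<Rightarrow> (('a \<times> 'b) \<Rightarrow>\<^sub>0 int) set"
  for R N M where
  zero: "0 \<in> tensor_rel R N M"
| plus: "x \<in> tensor_rel R N M \<Longrightarrow> \<rho> \<in> tensor_relators R N M \<Longrightarrow> x + \<rho> \<in> tensor_rel R N M"
| minus: "x \<in> tensor_rel R N M \<Longrightarrow> \<rho> \<in> tensor_relators R N M \<Longrightarrow> x - \<rho> \<in> tensor_rel R N M"

text \<open>The map f \<otimes> id_M on formal sums.\<close>
definition push :: "('a \<Rightarrow> 'c) \<Rightarrow> (('a \<times> 'b) \<Rightarrow>\<^sub>0 int) \<Rightarrow> (('c \<times> 'b) \<Rightarrow>\<^sub>0 int)" where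
  "push f \<phi> = (\<Sum>p\<in>Poly_Mapping.keys \<phi>. Poly_Mapping.single (f (fst p), snd p) (Poly_Mapping.lookup \<phi> p))"

text \<open>Flatness: - \<otimes>_R M preserves exactness of every sequence N1 -> N2 -> N3 of
  R-modules (the carriers may live in arbitrary types 'a, 'b, 'c).\<close>
definition flat_mod :: "('r, 'x) ring_scheme \<Rightarrow> ('r, 'm) module \<Rightarrow> 'a itself \<Rightarrow> 'b itself \<Rightarrow> 'c itself \<Rightarrow> bool" where
  "flat_mod R M _ _ _ \<longleftrightarrow> module R M \<and>
    (\<forall>(N1 :: ('r, 'a) module) (N2 :: ('r, 'b) module) (N3 :: ('r, 'c) module) f g.
       module R N1 \<and> module R N2 \<and> module R N3 \<and> mod_hom R N1 N2 f \<and> mod_hom R N2 N3 g \<and>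
       exact_at N1 N2 N3 f g \<longrightarrow>
       (\<forall>\<phi>\<in>formal_sums N2 M. push g \<phi> \<in> tensor_rel R N3 M \<longleftrightarrow>
           (\<exists>\<psi>\<in>formal_sums N1 M. \<phi> - push f \<psi> \<in> tensor_rel R N2 M)))"

text \<open>Faithfulness of - \<otimes>_R M on homomorphisms between modules in a class P:
  if f \<otimes> M = g \<otimes> M then f = g.\<close>
definition tensor_faithful_on :: "('r, 'x) ring_scheme \<Rightarrow> ('r, 'm) module \<Rightarrow>
    (('r, 'a) module \<Rightarrow> bool) \<Rightarrow> (('r, 'b) module \<Rightarrow> bool) \<Rightarrow> bool" where
  "tensor_faithful_on R M P Q \<longleftrightarrow>
    (\<forall>(N :: ('r, 'a) module) (N' :: ('r, 'b) module) f g.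
       module R N \<and> module R N' \<and> P N \<and> Q N' \<and> mod_hom R N N' f \<and> mod_hom R N N' g \<and>
       (\<forall>\<phi>\<in>formal_sums N M. push f \<phi> - push g \<phi> \<in> tensor_rel R N' M) \<longrightarrow>
       (\<forall>x\<in>carrier N. f x = g x))"

text \<open>Finitely presented: there is a surjection R^n -> N whose kernel is a finitely
  generated submodule of R^n (elements of R^n are functions nat => 'r vanishing from n on).\<close>
definition fin_presented :: "('r, 'x) ring_scheme \<Rightarrow> ('r, 'a) module \<Rightarrow> bool" where
  "fin_presented R N \<longleftrightarrow>
    (\<exists>(n::nat) gs. gs \<in> {..<n} \<rightarrow> carrier N \<and>
       (\<forall>y\<in>carrier N. \<exists>c. c \<in> {..<n} \<rightarrow> carrier R \<and>
            y = finsum N (\<lambda>j. c j \<odot>\<^bsub>N\<^esub> gs j) {..<n}) \<and>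
       (\<exists>(m::nat) ks. (\<forall>l<m. (\<forall>j. ks l j \<in> carrier R) \<and> (\<forall>j\<ge>n. ks l j = \<zero>\<^bsub>R\<^esub>)) \<and>
          {c. (\<forall>j. c j \<in> carrier R) \<and> (\<forall>j\<ge>n. c j = \<zero>\<^bsub>R\<^esub>) \<and>
              finsum N (\<lambda>j. c j \<odot>\<^bsub>N\<^esub> gs j) {..<n} = \<zero>\<^bsub>N\<^esub>}
          = {(\<lambda>j. finsum R (\<lambda>l. a l \<otimes>\<^bsub>R\<^esub> ks l j) {..<m}) | a. a \<in> {..<m} \<rightarrow> carrier R}))"

definition faithfully_flat :: "('r, 'x) ring_scheme \<Rightarrow> ('r, 'm) module \<Rightarrow> 'a itself \<Rightarrow> 'b itself \<Rightarrow> 'c itself \<Rightarrow> bool" where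
  "faithfully_flat R M ta tb tc \<longleftrightarrow> flat_mod R M ta tb tc \<and>
     tensor_faithful_on R M (\<lambda>N::('r,'a) module. True) (\<lambda>N'::('r,'b) module. True)"

definition fp_faithfully_flat :: "('r, 'x) ring_scheme \<Rightarrow> ('r, 'm) module \<Rightarrow> 'a itself \<Rightarrow> 'b itself \<Rightarrow> 'c itself \<Rightarrow> bool" where
  "fp_faithfully_flat R M ta tb tc \<longleftrightarrow> flat_mod R M ta tb tc \<and>
     tensor_faithful_on R M (\<lambda>N::('r,'a) module. fin_presented R N) (\<lambda>N'::('r,'b) module. fin_presented R N')"

definition quot_module :: "('r, 'x) ring_scheme \<Rightarrow> 'r set \<Rightarrow> ('r, 'r set) module" where
  "quot_module R I = \<lparr>partial_object.carrier = carrier (R Quot I), monoid.mult = monoid.mult (R Quot I),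
      monoid.one = monoid.one (R Quot I), ring.zero = ring.zero (R Quot I), ring.add = ring.add (R Quot I),
      module.smult = (\<lambda>s C. monoid.mult (R Quot I) (a_r_coset R I s) C)\<rparr>"

text \<open>R = k[x_i | i \<in> nat]: polynomials with monomials nat =>0 nat.\<close>
type_synonym 'k pR = "(nat \<Rightarrow>\<^sub>0 nat) \<Rightarrow>\<^sub>0 'k"

definition ring_of_type :: "('r::comm_ring_1) ring" where
  "ring_of_type = \<lparr>partial_object.carrier = UNIV, monoid.mult = (*), monoid.one = 1, ring.zero = 0, ring.add = (+)\<rparr>"

abbreviation polyR :: "('k::field) pR ring" where
  "polyR \<equiv> ring_of_type"

definition var :: "nat \<Rightarrow> ('k::field) pR" where
  "var i = Poly_Mapping.single (Poly_Mapping.single i 1) 1"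

text \<open>R[1/x_i], realised inside the fraction field of the domain R.\<close>
definition loc_var :: "nat \<Rightarrow> ('k::field) pR fract set" where
  "loc_var i = {Fract a (var i ^ n) | a n. True}"

text \<open>M = \<Oplus>_i R[1/x_i]: finitely supported families with i-th entry in R[1/x_i].\<close>
definition Mmod :: "('k::field pR, nat \<Rightarrow> 'k pR fract) module" where
  "Mmod = \<lparr>partial_object.carrier = {v. finite {i. v i \<noteq> 0} \<and> (\<forall>i. v i \<in> loc_var i)},
      monoid.mult = (\<lambda>v w i. v i * w i), monoid.one = (\<lambda>i. 1), ring.zero = (\<lambda>i. 0), ring.add = (\<lambda>v w i. v i + w i),
      module.smult = (\<lambda>r v i. Fract r 1 * v i)\<rparr>"

definition max_ideal :: "('k::field) pR set" where
  "max_ideal = genideal polyR (range var)"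

end

theory Submission
  imports Defs
begin

text \<open>
  Tensoring with \<open>M\<close> computes \<open>\<Oplus>\<^sub>i N[1/x\<^sub>i]\<close>: a formal sum of pairs \<open>(n, v)\<close> vanishes in
  \<open>N \<otimes>\<^sub>R M\<close> iff for every \<open>i\<close> and all large \<open>E\<close> the element \<open>\<Sum> (x\<^sub>i\<^sup>E v\<^sub>i) n\<close> of \<open>N\<close> is zero.
  Since localisation is exact, \<open>M\<close> is flat. If \<open>f \<otimes> M = g \<otimes> M\<close>, then \<open>f x - g x\<close> is killed by a
  power of every variable; a finite presentation only mentions finitely many variables, and a
  variable \<open>x\<^sub>i\<close> not among them acts injectively, so \<open>f x = g x\<close> for finitely presented modules.
  On the other hand every \<open>x\<^sub>i\<close> kills \<open>R/\<mathfrak>m\<close>, so \<open>(R/\<mathfrak>m) \<otimes> M = 0\<close> although \<open>R/\<mathfrak>m \<noteq> 0\<close>.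
\<close>

lemma ring_of_type_simps [simp]:
  "carrier (ring_of_type :: 'r::comm_ring_1 ring) = UNIV"
  "monoid.mult (ring_of_type :: 'r::comm_ring_1 ring) = (*)"
  "monoid.one (ring_of_type :: 'r::comm_ring_1 ring) = 1"
  "ring.zero (ring_of_type :: 'r::comm_ring_1 ring) = 0"
  "ring.add (ring_of_type :: 'r::comm_ring_1 ring) = (+)"
  by (simp_all add: ring_of_type_def)

lemma cring_ring_of_type: "cring (ring_of_type :: 'r::comm_ring_1 ring)"
  by (rule cringI) (auto intro!: abelian_groupI comm_monoidI exI[of _ "- _"] simp: algebra_simps)

lemma ring_of_type_a_inv [simp]: "a_inv (ring_of_type :: 'r::comm_ring_1 ring) x = - x"
proof -
  interpret cring "ring_of_type :: 'r ring" by (rule cring_ring_of_type)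
  show ?thesis by (rule minus_equality) auto
qed

lemma finsum_ring_of_type:
  assumes "finite A"
  shows "finsum (ring_of_type :: 'r::comm_ring_1 ring) f A = sum f A"
proof -
  interpret cring "ring_of_type :: 'r ring" by (rule cring_ring_of_type)
  show ?thesis using assms by (induction A rule: finite_induct) (simp_all add: finsum_insert)
qed

definition frag_lift :: "('b, 'c) ring_scheme \<Rightarrow> ('x \<Rightarrow> 'b) \<Rightarrow> ('x \<Rightarrow>\<^sub>0 int) \<Rightarrow> 'b" where
  "frag_lift G F \<phi> = finsum G (\<lambda>p. add_pow G (Poly_Mapping.lookup \<phi> p) (F p)) (Poly_Mapping.keys \<phi>)"

context abelian_group
begin

lemma add_pow_int_zero [simp]: "add_pow G (0::int) x = \<zero>"
  by (simp add: add_pow_def)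

lemma add_diff_diff_cancel: "a \<in> carrier G \<Longrightarrow> b \<in> carrier G \<Longrightarrow> a \<oplus> b \<ominus> a \<ominus> b = \<zero>"
proof -
  assume "a \<in> carrier G" "b \<in> carrier G"
  then have "a \<oplus> b \<ominus> a \<ominus> b = (a \<oplus> b) \<oplus> \<ominus> (a \<oplus> b)"
    by (simp add: a_minus_def add.m_assoc minus_add)
  then show ?thesis using \<open>a \<in> carrier G\<close> \<open>b \<in> carrier G\<close> by (simp add: r_neg)
qed

lemma frag_lift_superset:
  assumes "\<And>p. F p \<in> carrier G" "finite K" "Poly_Mapping.keys \<phi> \<subseteq> K"
  shows "frag_lift G F \<phi> = (\<Oplus>p\<in>K. add_pow G (Poly_Mapping.lookup \<phi> p) (F p))"
  unfolding frag_lift_def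
  by (rule add.finprod_mono_neutral_cong_left) (use assms in \<open>auto simp: in_keys_iff\<close>)

lemma frag_lift_closed: "(\<And>p. F p \<in> carrier G) \<Longrightarrow> frag_lift G F \<phi> \<in> carrier G"
  unfolding frag_lift_def by (intro finsum_closed) auto

lemma frag_lift_zero [simp]: "frag_lift G F 0 = \<zero>"
  unfolding frag_lift_def by simp

lemma frag_lift_of: "(\<And>p. F p \<in> carrier G) \<Longrightarrow> frag_lift G F (frag_of p) = F p"
  unfolding frag_lift_def by simp

lemma frag_lift_add:
  assumes F: "\<And>p. F p \<in> carrier G"
  shows "frag_lift G F (a + b) = frag_lift G F a \<oplus> frag_lift G F b"
proof -
  let ?K = "Poly_Mapping.keys a \<union> Poly_Mapping.keys b"
  let ?c = "\<lambda>\<phi> p. add_pow G (Poly_Mapping.lookup \<phi> p) (F p)"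
  have "frag_lift G F (a + b) = (\<Oplus>p\<in>?K. ?c (a + b) p)"
    using F keys_add[of a b] by (intro frag_lift_superset) auto
  also have "\<dots> = (\<Oplus>p\<in>?K. ?c a p \<oplus> ?c b p)"
    using F by (intro add.finprod_cong') (auto simp: lookup_add add.int_pow_mult)
  also have "\<dots> = (\<Oplus>p\<in>?K. ?c a p) \<oplus> (\<Oplus>p\<in>?K. ?c b p)"
    using F by (intro finsum_addf) auto
  also have "\<dots> = frag_lift G F a \<oplus> frag_lift G F b"
    using F by (subst (1 2) frag_lift_superset[where K = ?K]) auto
  finally show ?thesis .
qed

lemma frag_lift_uminus:
  assumes F: "\<And>p. F p \<in> carrier G"
  shows "frag_lift G F (- a) = \<ominus> frag_lift G F a"
proof -
  have "frag_lift G F (- a) \<oplus> frag_lift G F a = \<zero>"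
    using frag_lift_add[OF F, where a = "- a" and b = a, symmetric] by simp
  moreover have "frag_lift G F (- a) \<in> carrier G" "frag_lift G F a \<in> carrier G"
    using F by (auto intro: frag_lift_closed)
  ultimately show ?thesis by (metis add.inv_equality)
qed

lemma frag_lift_diff:
  assumes F: "\<And>p. F p \<in> carrier G"
  shows "frag_lift G F (a - b) = frag_lift G F a \<ominus> frag_lift G F b"
  using frag_lift_add[OF F, where a = a and b = "- b"] frag_lift_uminus[OF F, where a = b]
  by (simp add: a_minus_def)

lemma frag_lift_sum:
  assumes F: "\<And>p. F p \<in> carrier G" and I: "finite I"
  shows "frag_lift G F (\<Sum>i\<in>I. \<phi> i) = (\<Oplus>i\<in>I. frag_lift G F (\<phi> i))"
  using I by (induction I rule: finite_induct)
    (auto simp: frag_lift_add[OF F] frag_lift_closed[OF F] finsum_insert)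

lemma frag_lift_eq_zero:
  assumes "\<And>p. p \<in> Poly_Mapping.keys \<phi> \<Longrightarrow> F p = \<zero>"
  shows "frag_lift G F \<phi> = \<zero>"
proof -
  have "frag_lift G F \<phi> = finsum G (\<lambda>_. \<zero>) (Poly_Mapping.keys \<phi>)"
    unfolding frag_lift_def using assms by (intro add.finprod_cong') (simp_all add: add.int_pow_one)
  then show ?thesis by simp
qed

end

declare tensor_rel.zero [simp, intro]

lemma tensor_rel_add:
  assumes x: "x \<in> tensor_rel R N M"
  shows "y \<in> tensor_rel R N M \<Longrightarrow> x + y \<in> tensor_rel R N M"
proof (induction y rule: tensor_rel.induct)
  case (plus y \<rho>)
  from tensor_rel.plus[OF plus.IH plus.hyps(2)] show ?case by (simp add: add.assoc)
next
  case (minus y \<rho>)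
  from tensor_rel.minus[OF minus.IH minus.hyps(2)] show ?case by (simp add: add_diff_eq)
qed (use x in simp)

lemma tensor_rel_uminus: "x \<in> tensor_rel R N M \<Longrightarrow> - x \<in> tensor_rel R N M"
proof (induction x rule: tensor_rel.induct)
  case (plus y \<rho>)
  from tensor_rel.minus[OF plus.IH plus.hyps(2)] show ?case by simp
next
  case (minus y \<rho>)
  from tensor_rel.plus[OF minus.IH minus.hyps(2)] show ?case by simp
qed simp

lemma tensor_rel_diff:
  "x \<in> tensor_rel R N M \<Longrightarrow> y \<in> tensor_rel R N M \<Longrightarrow> x - y \<in> tensor_rel R N M"
  using tensor_rel_add[of x R N M "- y"] tensor_rel_uminus[of y R N M] by simp

lemma tensor_rel_sum:
  "(\<And>i. i \<in> I \<Longrightarrow> f i \<in> tensor_rel R N M) \<Longrightarrow> sum f I \<in> tensor_rel R N M"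
  by (induction I rule: infinite_finite_induct) (auto intro: tensor_rel_add)

lemma tensor_relators_subset: "tensor_relators R N M \<subseteq> tensor_rel R N M"
  using tensor_rel.plus[OF tensor_rel.zero] by fastforce

lemma tensor_rel_add_left:
  "n \<in> carrier N \<Longrightarrow> n' \<in> carrier N \<Longrightarrow> m \<in> carrier M \<Longrightarrow>
   frag_of (n \<oplus>\<^bsub>N\<^esub> n', m) - frag_of (n, m) - frag_of (n', m) \<in> tensor_rel R N M"
  by (rule tensor_relators_subset[THEN subsetD]) (unfold tensor_relators_def, blast)

lemma tensor_rel_add_right:
  "n \<in> carrier N \<Longrightarrow> m \<in> carrier M \<Longrightarrow> m' \<in> carrier M \<Longrightarrow>
   frag_of (n, m \<oplus>\<^bsub>M\<^esub> m') - frag_of (n, m) - frag_of (n, m') \<in> tensor_rel R N M"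
  by (rule tensor_relators_subset[THEN subsetD]) (unfold tensor_relators_def, blast)

lemma tensor_rel_smult:
  "r \<in> carrier R \<Longrightarrow> n \<in> carrier N \<Longrightarrow> m \<in> carrier M \<Longrightarrow>
   frag_of (r \<odot>\<^bsub>N\<^esub> n, m) - frag_of (n, r \<odot>\<^bsub>M\<^esub> m) \<in> tensor_rel R N M"
  by (rule tensor_relators_subset[THEN subsetD]) (unfold tensor_relators_def, blast)

lemma tensor_rel_zero_left:
  assumes "abelian_group N" "m \<in> carrier M"
  shows "frag_of (\<zero>\<^bsub>N\<^esub>, m) \<in> tensor_rel R N M"
proof -
  interpret abelian_group N by fact
  have "frag_of (\<zero>\<^bsub>N\<^esub> \<oplus>\<^bsub>N\<^esub> \<zero>\<^bsub>N\<^esub>, m) - frag_of (\<zero>\<^bsub>N\<^esub>, m) - frag_of (\<zero>\<^bsub>N\<^esub>, m) \<in> tensor_rel R N M"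
    using assms by (intro tensor_rel_add_left) auto
  then show ?thesis using tensor_rel_uminus[of "- frag_of (\<zero>\<^bsub>N\<^esub>, m)"] by simp
qed

lemma tensor_rel_zero_right:
  assumes "abelian_group M" "n \<in> carrier N"
  shows "frag_of (n, \<zero>\<^bsub>M\<^esub>) \<in> tensor_rel R N M"
proof -
  interpret abelian_group M by fact
  have "frag_of (n, \<zero>\<^bsub>M\<^esub> \<oplus>\<^bsub>M\<^esub> \<zero>\<^bsub>M\<^esub>) - frag_of (n, \<zero>\<^bsub>M\<^esub>) - frag_of (n, \<zero>\<^bsub>M\<^esub>) \<in> tensor_rel R N M"
    using assms by (intro tensor_rel_add_right) auto
  then show ?thesis using tensor_rel_uminus[of "- frag_of (n, \<zero>\<^bsub>M\<^esub>)"] by simp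
qed

lemma tensor_rel_minus_left:
  assumes "abelian_group N" "m \<in> carrier M" "x \<in> carrier N" "y \<in> carrier N"
  shows "frag_of (x \<ominus>\<^bsub>N\<^esub> y, m) - frag_of (x, m) + frag_of (y, m) \<in> tensor_rel R N M"
proof -
  interpret abelian_group N by fact
  have "(x \<ominus>\<^bsub>N\<^esub> y) \<oplus>\<^bsub>N\<^esub> y = x"
    using assms by (simp add: a_minus_def add.m_assoc l_neg)
  moreover have "frag_of ((x \<ominus>\<^bsub>N\<^esub> y) \<oplus>\<^bsub>N\<^esub> y, m) - frag_of (x \<ominus>\<^bsub>N\<^esub> y, m) - frag_of (y, m)
      \<in> tensor_rel R N M"
    using assms by (intro tensor_rel_add_left) auto
  ultimately have "- (frag_of (x, m) - frag_of (x \<ominus>\<^bsub>N\<^esub> y, m) - frag_of (y, m)) \<in> tensor_rel R N M"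
    using tensor_rel_uminus by (metis (no_types, lifting))
  then show ?thesis by (simp add: algebra_simps)
qed

lemma tensor_rel_frag_lift_left:
  assumes N: "abelian_group N" and m: "m \<in> carrier M" and F: "\<And>p. F p \<in> carrier N"
  shows "frag_of (frag_lift N F \<phi>, m) - frag_extend (\<lambda>p. frag_of (F p, m)) \<phi> \<in> tensor_rel R N M"
proof -
  interpret abelian_group N by fact
  have "Poly_Mapping.keys \<phi> \<subseteq> UNIV" by simp
  then show ?thesis
  proof (induction \<phi> rule: frag_induction)
    case zero
    then show ?case using tensor_rel_zero_left[OF N m] by simp
  next
    case (one x)
    then show ?case by (simp add: frag_lift_of F)
  next
    case (diff a b)
    let ?a = "frag_lift N F a" and ?b = "frag_lift N F b"
    let ?e = "frag_extend (\<lambda>p. frag_of (F p, m))"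
    have "frag_of (frag_lift N F (a - b), m) - ?e (a - b) =
       (frag_of (?a \<ominus>\<^bsub>N\<^esub> ?b, m) - frag_of (?a, m) + frag_of (?b, m))
       + (frag_of (?a, m) - ?e a) - (frag_of (?b, m) - ?e b)"
      by (simp add: frag_lift_diff F frag_extend_diff algebra_simps)
    also have "\<dots> \<in> tensor_rel R N M"
    proof -
      have "frag_of (?a \<ominus>\<^bsub>N\<^esub> ?b, m) - frag_of (?a, m) + frag_of (?b, m) \<in> tensor_rel R N M"
        using F by (intro tensor_rel_minus_left[OF N m] frag_lift_closed)
      then show ?thesis by (rule tensor_rel_diff[OF tensor_rel_add]) (use diff in auto)
    qed
    finally show ?case .
  qed
qed

lemma tensor_rel_finsum_right:
  assumes M: "abelian_group M" and n: "n \<in> carrier N" and I: "finite I" and g: "g \<in> I \<rightarrow> carrier M"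
  shows "frag_of (n, finsum M g I) - (\<Sum>i\<in>I. frag_of (n, g i)) \<in> tensor_rel R N M"
  using I g
proof (induction I rule: finite_induct)
  case empty
  interpret abelian_group M by fact
  show ?case using tensor_rel_zero_right[OF M n] by simp
next
  case (insert i I)
  interpret abelian_group M by fact
  have gi: "g i \<in> carrier M" and gI: "g \<in> I \<rightarrow> carrier M" using insert by auto
  have "frag_of (n, finsum M g (insert i I)) - (\<Sum>i\<in>insert i I. frag_of (n, g i)) =
      (frag_of (n, g i \<oplus>\<^bsub>M\<^esub> finsum M g I) - frag_of (n, g i) - frag_of (n, finsum M g I))
      + (frag_of (n, finsum M g I) - (\<Sum>i\<in>I. frag_of (n, g i)))"
    using insert gi gI by (simp add: finsum_insert)
  also have "\<dots> \<in> tensor_rel R N M"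
    using insert gi gI n by (intro tensor_rel_add tensor_rel_add_right) auto
  finally show ?case .
qed

lemma keys_formal_sums:
  "\<phi> \<in> formal_sums N M \<Longrightarrow> p \<in> Poly_Mapping.keys \<phi> \<Longrightarrow> fst p \<in> carrier N \<and> snd p \<in> carrier M"
  unfolding formal_sums_def by auto

lemma formal_sums_diff:
  "a \<in> formal_sums N M \<Longrightarrow> b \<in> formal_sums N M \<Longrightarrow> a - b \<in> formal_sums N M"
  unfolding formal_sums_def using keys_diff[of a b] by blast

lemma mod_hom_closed: "mod_hom R N N' f \<Longrightarrow> x \<in> carrier N \<Longrightarrow> f x \<in> carrier N'"
  unfolding mod_hom_def by blast

lemma mod_hom_add:
  "mod_hom R N N' f \<Longrightarrow> x \<in> carrier N \<Longrightarrow> y \<in> carrier N \<Longrightarrow> f (x \<oplus>\<^bsub>N\<^esub> y) = f x \<oplus>\<^bsub>N'\<^esub> f y"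
  unfolding mod_hom_def by blast

lemma mod_hom_smult:
  "mod_hom R N N' f \<Longrightarrow> r \<in> carrier R \<Longrightarrow> x \<in> carrier N \<Longrightarrow> f (r \<odot>\<^bsub>N\<^esub> x) = r \<odot>\<^bsub>N'\<^esub> f x"
  unfolding mod_hom_def by blast

lemma mod_hom_minus:
  assumes N: "abelian_group N" and N': "abelian_group N'" and f: "mod_hom R N N' f"
    and x: "x \<in> carrier N" and y: "y \<in> carrier N"
  shows "f (x \<ominus>\<^bsub>N\<^esub> y) = f x \<ominus>\<^bsub>N'\<^esub> f y"
proof -
  interpret N: abelian_group N by fact
  interpret N': abelian_group N' by fact
  have sum: "f (x \<ominus>\<^bsub>N\<^esub> y) \<oplus>\<^bsub>N'\<^esub> f y = f x"
    using x y by (simp add: mod_hom_add[OF f, symmetric] a_minus_def N.add.m_assoc N.l_neg)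
  have "f (x \<ominus>\<^bsub>N\<^esub> y) \<in> carrier N'" "f y \<in> carrier N'"
    using x y mod_hom_closed[OF f] by auto
  then have "f (x \<ominus>\<^bsub>N\<^esub> y) = (f (x \<ominus>\<^bsub>N\<^esub> y) \<oplus>\<^bsub>N'\<^esub> f y) \<ominus>\<^bsub>N'\<^esub> f y"
    by (simp add: a_minus_def N'.add.m_assoc N'.r_neg)
  then show ?thesis by (simp only: sum)
qed

lemma push_eq_frag_extend: "push f \<phi> = frag_extend (\<lambda>p. frag_of (f (fst p), snd p)) \<phi>"
proof -
  have "frag_cmul k (frag_of x) = Poly_Mapping.single x k" for k and x :: "'a \<times> 'b"
    by (rule poly_mapping_eqI) (simp add: lookup_single)
  then show ?thesis unfolding push_def frag_extend_def by simp
qed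

lemma push_zero [simp]: "push f 0 = 0"
  by (simp add: push_eq_frag_extend)

lemma push_of [simp]: "push f (frag_of (n, m)) = frag_of (f n, m)"
  by (simp add: push_eq_frag_extend)

lemma push_add: "push f (a + b) = push f a + push f b"
  by (simp add: push_eq_frag_extend frag_extend_add)

lemma push_diff: "push f (a - b) = push f a - push f b"
  by (simp add: push_eq_frag_extend frag_extend_diff)

lemma push_sum: "push f (sum g I) = (\<Sum>i\<in>I. push f (g i))"
  by (induction I rule: infinite_finite_induct) (simp_all add: push_add)

lemma push_comp: "push g (push f \<psi>) = push (g \<circ> f) \<psi>"
proof -
  have "push g (push f \<psi>) = frag_extend (frag_of \<circ> (\<lambda>p. (g (fst p), snd p)))
      (frag_extend (frag_of \<circ> (\<lambda>p. (f (fst p), snd p))) \<psi>)"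
    by (simp add: push_eq_frag_extend o_def)
  also have "\<dots> = frag_extend (frag_of \<circ> (\<lambda>p. (g (fst p), snd p)) \<circ> (\<lambda>p. (f (fst p), snd p))) \<psi>"
    by (rule frag_extend_compose)
  finally show ?thesis by (simp add: push_eq_frag_extend o_def)
qed

lemma push_formal_sums:
  assumes "\<phi> \<in> formal_sums N M" "f \<in> carrier N \<rightarrow> carrier N'"
  shows "push f \<phi> \<in> formal_sums N' M"
proof -
  have "Poly_Mapping.keys (push f \<phi>) \<subseteq> (\<lambda>p. (f (fst p), snd p)) ` Poly_Mapping.keys \<phi>"
    unfolding push_eq_frag_extend using keys_frag_extend[of "\<lambda>p. frag_of (f (fst p), snd p)" \<phi>] by auto
  then show ?thesis using assms unfolding formal_sums_def by fastforce
qed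

lemma push_tensor_relators:
  assumes f: "mod_hom R N N' f" and \<rho>: "\<rho> \<in> tensor_relators R N M"
  shows "push f \<rho> \<in> tensor_rel R N' M"
  using \<rho> unfolding tensor_relators_def
proof (elim UnE CollectE exE conjE)
  fix n n' m assume "\<rho> = frag_of (n \<oplus>\<^bsub>N\<^esub> n', m) - frag_of (n, m) - frag_of (n', m)"
    "n \<in> carrier N" "n' \<in> carrier N" "m \<in> carrier M"
  then show ?thesis
    by (simp add: push_diff mod_hom_add[OF f] mod_hom_closed[OF f] tensor_rel_add_left)
next
  fix n m m' assume "\<rho> = frag_of (n, m \<oplus>\<^bsub>M\<^esub> m') - frag_of (n, m) - frag_of (n, m')"
    "n \<in> carrier N" "m \<in> carrier M" "m' \<in> carrier M"
  then show ?thesis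
    by (simp add: push_diff mod_hom_closed[OF f] tensor_rel_add_right)
next
  fix r n m assume "\<rho> = frag_of (r \<odot>\<^bsub>N\<^esub> n, m) - frag_of (n, r \<odot>\<^bsub>M\<^esub> m)"
    "r \<in> carrier R" "n \<in> carrier N" "m \<in> carrier M"
  then show ?thesis
    by (simp add: push_diff mod_hom_smult[OF f] mod_hom_closed[OF f] tensor_rel_smult)
qed

lemma push_tensor_rel:
  assumes f: "mod_hom R N N' f"
  shows "x \<in> tensor_rel R N M \<Longrightarrow> push f x \<in> tensor_rel R N' M"
proof (induction x rule: tensor_rel.induct)
  case (plus x \<rho>)
  then show ?case by (simp add: push_add tensor_rel_add push_tensor_relators[OF f])
next
  case (minus x \<rho>)
  then show ?case by (simp add: push_diff tensor_rel_diff push_tensor_relators[OF f])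
qed simp

lemma push_tensor_rel_if_zero:
  assumes N': "abelian_group N'"
    and zero: "\<And>p. p \<in> Poly_Mapping.keys \<psi> \<Longrightarrow> f (fst p) = \<zero>\<^bsub>N'\<^esub> \<and> snd p \<in> carrier M"
  shows "push f \<psi> \<in> tensor_rel R N' M"
proof -
  have "Poly_Mapping.keys \<psi> \<subseteq> {p. f (fst p) = \<zero>\<^bsub>N'\<^esub> \<and> snd p \<in> carrier M}" using zero by auto
  then show ?thesis
  proof (induction \<psi> rule: frag_induction)
    case (one x) then show ?case by (cases x) (simp add: tensor_rel_zero_left[OF N'])
  next
    case (diff a b) then show ?case by (simp add: push_diff tensor_rel_diff)
  qed simp
qed

lemma frag_lift_push:
  assumes N: "abelian_group N" and N': "abelian_group N'" and f: "mod_hom R N N' f"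
    and F: "\<And>p. F p \<in> carrier N" and F': "\<And>p. F' p \<in> carrier N'"
    and FF': "\<And>n m. n \<in> carrier N \<Longrightarrow> F' (f n, m) = f (F (n, m))"
    and keys: "Poly_Mapping.keys \<phi> \<subseteq> carrier N \<times> UNIV"
  shows "frag_lift N' F' (push f \<phi>) = f (frag_lift N F \<phi>)"
proof -
  interpret N: abelian_group N by fact
  interpret N': abelian_group N' by fact
  have f0: "f \<zero>\<^bsub>N\<^esub> = \<zero>\<^bsub>N'\<^esub>"
    using mod_hom_minus[OF N N' f, of "\<zero>\<^bsub>N\<^esub>" "\<zero>\<^bsub>N\<^esub>"] mod_hom_closed[OF f, of "\<zero>\<^bsub>N\<^esub>"]
    by (simp add: a_minus_def N.r_neg N'.r_neg)
  show ?thesis using keys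
  proof (induction \<phi> rule: frag_induction)
    case zero show ?case by (simp add: f0)
  next
    case (one x) then show ?case
      by (cases x) (simp add: N'.frag_lift_of[OF F'] N.frag_lift_of[OF F] FF')
  next
    case (diff a b) then show ?case
      by (simp add: push_diff N'.frag_lift_diff[OF F'] N.frag_lift_diff[OF F]
          mod_hom_minus[OF N N' f] N.frag_lift_closed[OF F])
  qed
qed

lemma Mmod_simps [simp]:
  "carrier Mmod = {v. finite {i. v i \<noteq> 0} \<and> (\<forall>i. v i \<in> loc_var i)}"
  "ring.zero Mmod = (\<lambda>i. 0)"
  "ring.add Mmod = (\<lambda>v w i. v i + w i)"
  "module.smult Mmod = (\<lambda>r v i. Fract r 1 * v i)"
  by (simp_all add: Mmod_def)

lemma var_nonzero [simp]: "var i \<noteq> (0 :: 'k::field pR)"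
  unfolding var_def by (metis lookup_single_eq one_neq_zero single_zero)

lemma var_power: "var i ^ E = (Poly_Mapping.single (Poly_Mapping.single i E) 1 :: 'k::field pR)"
proof (induction E)
  case (Suc E)
  have "var i ^ Suc E = (Poly_Mapping.single (Poly_Mapping.single i 1) 1 :: 'k pR)
      * Poly_Mapping.single (Poly_Mapping.single i E) 1"
    by (simp only: power_Suc Suc.IH) (simp add: var_def)
  then show ?case by (simp add: mult_single single_add[symmetric])
qed simp

lemma loc_var_zero [simp]: "0 \<in> loc_var i"
  unfolding loc_var_def by (auto intro!: exI[of _ 0] exI[of _ 0] simp: Zero_fract_def)

lemma loc_var_add: "a \<in> loc_var i \<Longrightarrow> b \<in> loc_var i \<Longrightarrow> a + b \<in> loc_var i"
proof -
  assume "a \<in> loc_var i" "b \<in> loc_var i"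
  then obtain x n y m where "a = Fract x (var i ^ n)" "b = Fract y (var i ^ m)"
    unfolding loc_var_def by auto
  then have "a + b = Fract (x * var i ^ m + y * var i ^ n) (var i ^ (n + m))"
    by (simp add: power_add mult.commute)
  then show ?thesis unfolding loc_var_def by blast
qed

lemma loc_var_uminus: "a \<in> loc_var i \<Longrightarrow> - a \<in> loc_var i"
  unfolding loc_var_def by (auto, blast)

lemma loc_var_smult: "a \<in> loc_var i \<Longrightarrow> Fract r 1 * a \<in> loc_var i"
  unfolding loc_var_def by (auto simp: mult.commute, blast)

lemma Fract_add_1: "Fract (a + b) 1 = Fract a 1 + Fract (b :: 'a::idom) 1"
  by simp

lemma Fract_mult_1: "Fract (a * b) 1 = Fract a 1 * Fract (b :: 'a::idom) 1"
  by simp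

lemma module_Mmod: "module (polyR :: 'k::field pR ring) Mmod"
proof (rule moduleI)
  show "cring (polyR :: 'k pR ring)" by (rule cring_ring_of_type)
  show "abelian_group (Mmod :: ('k pR, _) module)"
  proof (rule abelian_groupI)
    fix x y assume "x \<in> carrier (Mmod :: ('k pR, _) module)" "y \<in> carrier (Mmod :: ('k pR, _) module)"
    then show "x \<oplus>\<^bsub>Mmod\<^esub> y \<in> carrier Mmod"
      by (auto simp: loc_var_add intro: finite_subset[of _ "{i. x i \<noteq> 0} \<union> {i. y i \<noteq> 0}"])
  next
    fix x assume "x \<in> carrier (Mmod :: ('k pR, _) module)"
    then show "\<exists>y \<in> carrier Mmod. y \<oplus>\<^bsub>Mmod\<^esub> x = \<zero>\<^bsub>Mmod\<^esub>"
      by (auto intro!: exI[of _ "\<lambda>i. - x i"] simp: loc_var_uminus)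
  qed (auto simp: algebra_simps)
next
  fix a x assume "a \<in> carrier (polyR :: 'k pR ring)" "x \<in> carrier (Mmod :: ('k pR, _) module)"
  then show "a \<odot>\<^bsub>Mmod\<^esub> x \<in> carrier Mmod"
    by (auto simp: loc_var_smult intro: finite_subset[of _ "{i. x i \<noteq> 0}"])
next
  fix a b x
  show "(a \<oplus>\<^bsub>polyR\<^esub> b) \<odot>\<^bsub>Mmod\<^esub> x = a \<odot>\<^bsub>Mmod\<^esub> x \<oplus>\<^bsub>Mmod\<^esub> b \<odot>\<^bsub>Mmod\<^esub> (x :: nat \<Rightarrow> 'k pR fract)"
    by (simp only: Mmod_simps ring_of_type_simps Fract_add_1 distrib_right)
next
  fix a b x
  show "(a \<otimes>\<^bsub>polyR\<^esub> b) \<odot>\<^bsub>Mmod\<^esub> x = a \<odot>\<^bsub>Mmod\<^esub> (b \<odot>\<^bsub>Mmod\<^esub> (x :: nat \<Rightarrow> 'k pR fract))"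
    by (simp only: Mmod_simps ring_of_type_simps Fract_mult_1 mult.assoc)
next
  fix x
  show "\<one>\<^bsub>polyR\<^esub> \<odot>\<^bsub>Mmod\<^esub> x = (x :: nat \<Rightarrow> 'k pR fract)"
    by (simp add: One_fract_def[symmetric])
qed (simp_all add: distrib_left)

lemma abelian_group_Mmod: "abelian_group (Mmod :: ('k::field pR, nat \<Rightarrow> 'k pR fract) module)"
  using module_Mmod unfolding module_def by blast

lemma finsum_Mmod:
  assumes "finite I" "g \<in> I \<rightarrow> carrier (Mmod :: ('k::field pR, nat \<Rightarrow> 'k pR fract) module)"
  shows "finsum (Mmod :: ('k pR, nat \<Rightarrow> 'k pR fract) module) g I = (\<lambda>j. \<Sum>i\<in>I. g i j)"
proof -
  interpret module "polyR :: 'k pR ring" "Mmod :: ('k pR, nat \<Rightarrow> 'k pR fract) module"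
    by (rule module_Mmod)
  show ?thesis using assms by (induction I rule: finite_induct) (simp_all add: finsum_insert)
qed

definition inv_var_vec :: "nat \<Rightarrow> nat \<Rightarrow> nat \<Rightarrow> 'k::field pR fract" where
  "inv_var_vec i E = (\<lambda>j. if j = i then Fract 1 (var i ^ E) else 0)"

lemma inv_var_vec_other [simp]: "j \<noteq> i \<Longrightarrow> inv_var_vec i E j = 0"
  by (simp add: inv_var_vec_def)

lemma inv_var_vec_carrier: "inv_var_vec i E \<in> carrier (Mmod :: ('k::field pR, nat \<Rightarrow> 'k pR fract) module)"
proof -
  have "finite {j. inv_var_vec i E j \<noteq> (0 :: 'k pR fract)}"
    by (rule finite_subset[of _ "{i}"]) (auto simp: inv_var_vec_def)
  moreover have "inv_var_vec i E j \<in> (loc_var j :: 'k pR fract set)" for j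
    using loc_var_zero[of j] unfolding inv_var_vec_def loc_var_def by auto
  ultimately show ?thesis by simp
qed

definition frag_indices :: "(('a \<times> (nat \<Rightarrow> 'k::field pR fract)) \<Rightarrow>\<^sub>0 int) \<Rightarrow> nat set" where
  "frag_indices \<phi> = (\<Union>p\<in>Poly_Mapping.keys \<phi>. {j. snd p j \<noteq> 0})"

lemma finite_frag_indices: "\<phi> \<in> formal_sums N Mmod \<Longrightarrow> finite (frag_indices \<phi>)"
  unfolding frag_indices_def formal_sums_def by auto

section \<open>Clearing denominators\<close>

text \<open>When \<open>clears a w\<close>, \<open>cleared a w\<close> is the ring element \<open>a w\<close>; otherwise it is junk.\<close>
definition clears :: "'a::idom \<Rightarrow> 'a fract \<Rightarrow> bool" where
  "clears a w \<longleftrightarrow> (\<exists>r. w * Fract a 1 = Fract r 1)"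

definition cleared :: "'a::idom \<Rightarrow> 'a fract \<Rightarrow> 'a" where
  "cleared a w = (THE r. w * Fract a 1 = Fract r 1)"

lemma clearsI: "w * Fract a 1 = Fract r 1 \<Longrightarrow> clears a w \<and> cleared a w = r"
  unfolding clears_def cleared_def by (auto intro!: the_equality simp: eq_fract)

lemma cleared_eq: "clears a w \<Longrightarrow> w * Fract a 1 = Fract (cleared a w) 1"
  unfolding clears_def using clearsI by metis

lemma cleared_repr: "clears a w \<Longrightarrow> a \<noteq> 0 \<Longrightarrow> w = Fract (cleared a w) 1 * Fract 1 a"
proof -
  assume "clears a w" "a \<noteq> 0"
  then have "w = (w * Fract a 1) * Fract 1 a"
    by (simp add: mult.assoc eq_fract One_fract_def)
  then show ?thesis by (simp only: cleared_eq[OF \<open>clears a w\<close>])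
qed

lemma clears_mult: "clears a w \<Longrightarrow> clears (b * a) w"
  and cleared_mult: "clears a w \<Longrightarrow> cleared (b * a) w = b * cleared a w"
proof -
  assume "clears a w"
  have "w * Fract (b * a) 1 = (w * Fract a 1) * Fract b 1"
    by (simp add: mult.assoc mult.commute)
  then have "w * Fract (b * a) 1 = Fract (b * cleared a w) 1"
    by (simp add: cleared_eq[OF \<open>clears a w\<close>] mult.commute)
  then show "clears (b * a) w" "cleared (b * a) w = b * cleared a w"
    using clearsI by blast+
qed

lemma clears_add: "clears a w \<Longrightarrow> clears a w' \<Longrightarrow> clears a (w + w')"
  and cleared_add: "clears a w \<Longrightarrow> clears a w' \<Longrightarrow> cleared a (w + w') = cleared a w + cleared a w'"
  using clearsI[of "w + w'" a "cleared a w + cleared a w'"] by (simp_all add: distrib_right cleared_eq)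

lemma clears_smult: "clears a w \<Longrightarrow> clears a (Fract r 1 * w)"
  and cleared_smult: "clears a w \<Longrightarrow> cleared a (Fract r 1 * w) = r * cleared a w"
  using clearsI[of "Fract r 1 * w" a "r * cleared a w"] by (simp_all add: mult.assoc cleared_eq)

lemma clears_zero: "clears a 0"
  and cleared_zero [simp]: "cleared a 0 = 0"
  using clearsI[of 0 a 0] by (simp_all add: Zero_fract_def)

lemma cleared_one [simp]: "cleared a 1 = a"
  using clearsI[of 1 a a] by simp

lemma cleared_inverse [simp]: "a \<noteq> 0 \<Longrightarrow> cleared a (Fract 1 a) = 1"
  and clears_inverse: "a \<noteq> 0 \<Longrightarrow> clears a (Fract 1 a)"
  using clearsI[of "Fract 1 a" a 1] by (simp_all add: eq_fract)

lemma clears_var_power_mono: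
  assumes "clears (var i ^ E) w" "E \<le> E'"
  shows "clears (var i ^ E') (w :: 'k::field pR fract)"
  using clears_mult[OF assms(1), of "var i ^ (E' - E)"] assms(2) by (simp flip: power_add)

lemma loc_var_eventually_clears:
  assumes "w \<in> loc_var i"
  shows "\<forall>\<^sub>F E in sequentially. clears (var i ^ E) (w :: 'k::field pR fract)"
proof -
  obtain a n where "w = Fract a (var i ^ n)" using assms unfolding loc_var_def by auto
  then have "clears (var i ^ n) w" by (intro conjunct1[OF clearsI]) (simp add: eq_fract)
  then show ?thesis
    unfolding eventually_sequentially using clears_var_power_mono by blast
qed

text \<open>
  The \<open>i\<close>-th component of the isomorphism \<open>N \<otimes>\<^sub>R M \<cong> \<Oplus>\<^sub>i N[1/x\<^sub>i]\<close>, computed with the common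
  denominator \<open>x\<^sub>i\<^sup>E\<close>: the tensor \<open>n \<otimes> v\<close> goes to \<open>(x\<^sub>i\<^sup>E v\<^sub>i) n / x\<^sub>i\<^sup>E\<close>, and we record the numerator.
\<close>
definition loc_comp :: "('k::field pR, 'a) module \<Rightarrow> nat \<Rightarrow> nat \<Rightarrow> 'a \<times> (nat \<Rightarrow> 'k pR fract) \<Rightarrow> 'a" where
  "loc_comp N i E p = (if fst p \<in> carrier N then cleared (var i ^ E) (snd p i) \<odot>\<^bsub>N\<^esub> fst p else \<zero>\<^bsub>N\<^esub>)"

definition frag_clears :: "nat \<Rightarrow> nat \<Rightarrow> (('a \<times> (nat \<Rightarrow> 'k::field pR fract)) \<Rightarrow>\<^sub>0 int) \<Rightarrow> bool" where
  "frag_clears i E \<phi> \<longleftrightarrow> (\<forall>p\<in>Poly_Mapping.keys \<phi>. clears (var i ^ E) (snd p i))"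

definition comp_vanishes ::
    "('k::field pR, 'a) module \<Rightarrow> nat \<Rightarrow> nat \<Rightarrow> (('a \<times> (nat \<Rightarrow> 'k pR fract)) \<Rightarrow>\<^sub>0 int) \<Rightarrow> bool" where
  "comp_vanishes N i E \<phi> \<longleftrightarrow> frag_clears i E \<phi> \<and> frag_lift N (loc_comp N i E) \<phi> = \<zero>\<^bsub>N\<^esub>"

lemma loc_comp_closed:
  assumes "module (polyR :: 'k::field pR ring) N"
  shows "loc_comp N i E p \<in> carrier N"
proof -
  interpret module "polyR :: 'k pR ring" N by fact
  show ?thesis by (simp add: loc_comp_def)
qed

lemma loc_comp_pair: "n \<in> carrier N \<Longrightarrow> loc_comp N i E (n, v) = cleared (var i ^ E) (v i) \<odot>\<^bsub>N\<^esub> n"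
  unfolding loc_comp_def by simp

lemma loc_comp_eq_zero:
  assumes "module (polyR :: 'k::field pR ring) N" "snd p i = 0"
  shows "loc_comp N i E p = \<zero>\<^bsub>N\<^esub>"
proof -
  interpret module "polyR :: 'k pR ring" N by fact
  show ?thesis unfolding loc_comp_def using assms(2) smult_l_null by simp
qed

lemma loc_comp_inv_var_vec:
  assumes "module (polyR :: 'k::field pR ring) N" "n \<in> carrier N"
  shows "loc_comp N i E (n, inv_var_vec i E) = n"
proof -
  interpret module "polyR :: 'k pR ring" N by fact
  show ?thesis using assms(2) smult_one by (simp add: loc_comp_pair inv_var_vec_def)
qed

lemma loc_comp_push:
  assumes g: "mod_hom polyR N N' g" and n: "n \<in> carrier N"
  shows "loc_comp N' i E (g n, v) = g (loc_comp N i E (n, (v :: nat \<Rightarrow> 'k::field pR fract)))"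
  using n mod_hom_closed[OF g n] by (simp add: loc_comp_pair mod_hom_smult[OF g])

lemma frag_clears_of: "frag_clears i E (frag_of p) \<longleftrightarrow> clears (var i ^ E) (snd p i)"
  unfolding frag_clears_def by simp

lemma frag_clears_add: "frag_clears i E a \<Longrightarrow> frag_clears i E b \<Longrightarrow> frag_clears i E (a + b)"
  unfolding frag_clears_def using keys_add[of a b] by blast

lemma frag_clears_diff: "frag_clears i E a \<Longrightarrow> frag_clears i E b \<Longrightarrow> frag_clears i E (a - b)"
  unfolding frag_clears_def using keys_diff[of a b] by blast

lemma formal_sums_eventually_clears:
  assumes "\<phi> \<in> formal_sums N (Mmod :: ('k::field pR, nat \<Rightarrow> 'k pR fract) module)"
  shows "\<forall>\<^sub>F E in sequentially. frag_clears i E \<phi>"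
  unfolding frag_clears_def
  using assms by (intro eventually_ball_finite ballI loc_var_eventually_clears)
    (auto simp: formal_sums_def dest!: subsetD)

section \<open>Relations in \<open>N \<otimes>\<^sub>R M\<close>\<close>

lemma tensor_relators_Mmod_vanish:
  assumes N: "module (polyR :: 'k::field pR ring) N" and \<rho>: "\<rho> \<in> tensor_relators polyR N Mmod"
  shows "\<forall>\<^sub>F E in sequentially. comp_vanishes N i E \<rho>"
proof -
  interpret module polyR N by fact
  have F: "\<And>p. loc_comp N i E p \<in> carrier N" for E using loc_comp_closed[OF N] .
  note simps = comp_vanishes_def frag_clears_diff frag_clears_of frag_lift_diff[OF F] frag_lift_of[OF F]
    loc_comp_pair
  note ev = loc_var_eventually_clears
  show ?thesis using \<rho> unfolding tensor_relators_def
  proof (elim UnE CollectE exE conjE)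
    fix n n' m assume \<rho>: "\<rho> = frag_of (n \<oplus>\<^bsub>N\<^esub> n', m) - frag_of (n, m) - frag_of (n', m)"
      and "n \<in> carrier N" "n' \<in> carrier N" "m \<in> carrier Mmod"
    then show ?thesis
      using ev[of "m i" i] by (auto elim!: eventually_mono simp: simps smult_r_distr add_diff_diff_cancel)
  next
    fix n m m' assume \<rho>: "\<rho> = frag_of (n, m \<oplus>\<^bsub>Mmod\<^esub> m') - frag_of (n, m) - frag_of (n, m')"
      and "n \<in> carrier N" "m \<in> carrier Mmod" "m' \<in> carrier Mmod"
    then have "\<forall>\<^sub>F E in sequentially. clears (var i ^ E) (m i) \<and> clears (var i ^ E) (m' i)"
      by (intro eventually_conj ev) auto
    then show ?thesis using \<open>n \<in> carrier N\<close>
      by (elim eventually_mono) (auto simp: \<rho> simps clears_add cleared_add smult_l_distr[simplified] add_diff_diff_cancel)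
  next
    fix r n m assume \<rho>: "\<rho> = frag_of (r \<odot>\<^bsub>N\<^esub> n, m) - frag_of (n, r \<odot>\<^bsub>Mmod\<^esub> m)"
      and "r \<in> carrier polyR" "n \<in> carrier N" "m \<in> carrier Mmod"
    have "\<forall>\<^sub>F E in sequentially. clears (var i ^ E) (m i)"
      using \<open>m \<in> carrier Mmod\<close> by (intro ev) simp
    then show ?thesis
    proof (rule eventually_mono)
      fix E assume E: "clears (var i ^ E) (m i)"
      have "cleared (var i ^ E) (m i) \<odot>\<^bsub>N\<^esub> (r \<odot>\<^bsub>N\<^esub> n) = (r * cleared (var i ^ E) (m i)) \<odot>\<^bsub>N\<^esub> n"
        using smult_assoc1[of "cleared (var i ^ E) (m i)" r n] \<open>n \<in> carrier N\<close> by (simp add: mult.commute)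
      then show "comp_vanishes N i E \<rho>"
        using E \<open>n \<in> carrier N\<close> by (simp add: \<rho> simps clears_smult cleared_smult a_minus_def r_neg)
    qed
  qed
qed

lemma tensor_rel_MmodD:
  assumes N: "module (polyR :: 'k::field pR ring) N" and x: "x \<in> tensor_rel polyR N Mmod"
  shows "\<forall>\<^sub>F E in sequentially. comp_vanishes N i E x"
proof -
  interpret module polyR N by fact
  have F: "\<And>p. loc_comp N i E p \<in> carrier N" for E using loc_comp_closed[OF N] .
  show ?thesis using x
  proof (induction x rule: tensor_rel.induct)
    case zero
    show ?case by (simp add: comp_vanishes_def frag_clears_def)
  next
    case (plus x \<rho>)
    from eventually_conj[OF plus.IH tensor_relators_Mmod_vanish[OF N plus.hyps(2), of i]] show ?case
      by (elim eventually_mono) (simp add: comp_vanishes_def frag_clears_add frag_lift_add[OF F])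
  next
    case (minus x \<rho>)
    from eventually_conj[OF minus.IH tensor_relators_Mmod_vanish[OF N minus.hyps(2), of i]] show ?case
      by (elim eventually_mono) (simp add: comp_vanishes_def frag_clears_diff frag_lift_diff[OF F] a_minus_def)
  qed
qed

lemma tensor_rel_split_pair:
  assumes N: "module (polyR :: 'k::field pR ring) N" and n: "n \<in> carrier N" and v: "v \<in> carrier Mmod"
    and I: "finite I" and supp: "{j. v j \<noteq> 0} \<subseteq> I" and E: "\<And>i. i \<in> I \<Longrightarrow> clears (var i ^ E i) (v i)"
  shows "frag_of (n, v) - (\<Sum>i\<in>I. frag_of (loc_comp N i (E i) (n, v), inv_var_vec i (E i)))
    \<in> tensor_rel polyR N Mmod"
proof -
  interpret module polyR N by fact
  interpret M: module "polyR :: 'k pR ring" "Mmod :: ('k pR, nat \<Rightarrow> 'k pR fract) module"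
    by (rule module_Mmod)
  define c where "c i = cleared (var i ^ E i) (v i)" for i
  have cM: "(\<lambda>i. c i \<odot>\<^bsub>Mmod\<^esub> inv_var_vec i (E i)) \<in> I \<rightarrow> carrier Mmod"
    using M.smult_closed[OF _ inv_var_vec_carrier] by auto
  have "finsum Mmod (\<lambda>i. c i \<odot>\<^bsub>Mmod\<^esub> inv_var_vec i (E i)) I = v"
  proof -
    have "(\<Sum>i\<in>I. (c i \<odot>\<^bsub>Mmod\<^esub> inv_var_vec i (E i)) j) = v j" for j
    proof -
      have "(\<Sum>i\<in>I. (c i \<odot>\<^bsub>Mmod\<^esub> inv_var_vec i (E i)) j)
          = (if j \<in> I then Fract (c j) 1 * Fract 1 (var j ^ E j) else 0)"
        using I by (simp add: inv_var_vec_def if_distrib sum.delta cong: if_cong)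
      also have "\<dots> = v j"
        using supp E cleared_repr[OF E[of j]] unfolding c_def by auto
      finally show ?thesis .
    qed
    then show ?thesis by (subst finsum_Mmod[OF I cM]) (simp add: fun_eq_iff)
  qed
  then have sum: "frag_of (n, v) - (\<Sum>i\<in>I. frag_of (n, c i \<odot>\<^bsub>Mmod\<^esub> inv_var_vec i (E i)))
      \<in> tensor_rel polyR N Mmod"
    using tensor_rel_finsum_right[OF abelian_group_Mmod n I cM, of polyR] by simp
  have smult: "frag_of (n, c i \<odot>\<^bsub>Mmod\<^esub> inv_var_vec i (E i)) - frag_of (loc_comp N i (E i) (n, v), inv_var_vec i (E i))
      \<in> tensor_rel polyR N Mmod" for i
    using tensor_rel_uminus[OF tensor_rel_smult[OF _ n inv_var_vec_carrier, of "c i" polyR i "E i"]] n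
    by (simp add: loc_comp_pair c_def)
  have "frag_of (n, v) - (\<Sum>i\<in>I. frag_of (loc_comp N i (E i) (n, v), inv_var_vec i (E i))) =
     (frag_of (n, v) - (\<Sum>i\<in>I. frag_of (n, c i \<odot>\<^bsub>Mmod\<^esub> inv_var_vec i (E i))))
     + (\<Sum>i\<in>I. frag_of (n, c i \<odot>\<^bsub>Mmod\<^esub> inv_var_vec i (E i))
         - frag_of (loc_comp N i (E i) (n, v), inv_var_vec i (E i)))"
    by (simp add: sum_subtractf)
  also have "\<dots> \<in> tensor_rel polyR N Mmod"
    using sum smult by (intro tensor_rel_add tensor_rel_sum)
  finally show ?thesis .
qed

lemma tensor_rel_split:
  assumes N: "module (polyR :: 'k::field pR ring) N" and \<phi>: "\<phi> \<in> formal_sums N Mmod"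
    and E: "\<And>i. frag_clears i (E i) \<phi>"
  shows "\<phi> - (\<Sum>i\<in>frag_indices \<phi>. frag_extend (\<lambda>p. frag_of (loc_comp N i (E i) p, inv_var_vec i (E i))) \<phi>)
    \<in> tensor_rel polyR N Mmod"
proof -
  define I where "I = frag_indices \<phi>"
  have I: "finite I" unfolding I_def by (rule finite_frag_indices[OF \<phi>])
  have "Poly_Mapping.keys \<phi> \<subseteq> {p. fst p \<in> carrier N \<and> snd p \<in> carrier Mmod \<and> {j. snd p j \<noteq> 0} \<subseteq> I
      \<and> (\<forall>i\<in>I. clears (var i ^ E i) (snd p i))}"
    using keys_formal_sums[OF \<phi>] E unfolding I_def frag_indices_def frag_clears_def by blast
  then show ?thesis unfolding I_def[symmetric]
  proof (induction \<phi> rule: frag_induction)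
    case (one x)
    then show ?case by (cases x) (simp add: tensor_rel_split_pair[OF N _ _ I])
  next
    case (diff a b)
    then show ?case
      using tensor_rel_diff[OF diff.IH] by (simp add: frag_extend_diff sum_subtractf algebra_simps)
  qed simp
qed

lemma tensor_rel_MmodI:
  assumes N: "module (polyR :: 'k::field pR ring) N" and \<phi>: "\<phi> \<in> formal_sums N Mmod"
    and vanish: "\<And>i. \<exists>E. comp_vanishes N i E \<phi>"
  shows "\<phi> \<in> tensor_rel polyR N Mmod"
proof -
  interpret module polyR N by fact
  obtain E where E: "\<And>i. comp_vanishes N i (E i) \<phi>" using vanish by metis
  let ?t = "\<lambda>i. frag_extend (\<lambda>p. frag_of (loc_comp N i (E i) p, inv_var_vec i (E i))) \<phi>"
  have split: "\<phi> - (\<Sum>i\<in>frag_indices \<phi>. ?t i) \<in> tensor_rel polyR N Mmod"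
    using E unfolding comp_vanishes_def by (intro tensor_rel_split[OF N \<phi>]) blast
  have "?t i \<in> tensor_rel polyR N Mmod" for i
  proof -
    have "frag_of (frag_lift N (loc_comp N i (E i)) \<phi>, inv_var_vec i (E i)) - ?t i \<in> tensor_rel polyR N Mmod"
      by (rule tensor_rel_frag_lift_left[OF abelian_group_axioms inv_var_vec_carrier loc_comp_closed[OF N]])
    moreover have "frag_of (frag_lift N (loc_comp N i (E i)) \<phi>, inv_var_vec i (E i)) \<in> tensor_rel polyR N Mmod"
      using E[of i] tensor_rel_zero_left[OF abelian_group_axioms inv_var_vec_carrier]
      by (simp add: comp_vanishes_def)
    ultimately show ?thesis using tensor_rel_diff by fastforce
  qed
  then have "(\<phi> - (\<Sum>i\<in>frag_indices \<phi>. ?t i)) + (\<Sum>i\<in>frag_indices \<phi>. ?t i) \<in> tensor_rel polyR N Mmod"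
    using split by (intro tensor_rel_add tensor_rel_sum)
  then show ?thesis by simp
qed

section \<open>Flatness\<close>

lemma frag_lift_loc_comp_push:
  assumes N: "module (polyR :: 'k::field pR ring) N" and N': "module (polyR :: 'k::field pR ring) N'"
    and g: "mod_hom polyR N N' g" and \<phi>: "\<phi> \<in> formal_sums N Mmod"
  shows "frag_lift N' (loc_comp N' i E) (push g \<phi>) = g (frag_lift N (loc_comp N i E) \<phi>)"
  using \<phi> unfolding formal_sums_def
  by (intro frag_lift_push[OF module.axioms(2)[OF N] module.axioms(2)[OF N'] g]
      loc_comp_closed[OF N] loc_comp_closed[OF N'] loc_comp_push[OF g]) auto

lemma flat_lift_components:
  fixes N1 :: "('k::field pR, 'a) module" and N2 :: "('k pR, 'b) module" and N3 :: "('k pR, 'c) module"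
  assumes N2: "module polyR N2" and N3: "module polyR N3"
    and g: "mod_hom polyR N2 N3 g" and ex: "exact_at N1 N2 N3 f g"
    and \<phi>: "\<phi> \<in> formal_sums N2 Mmod" and g\<phi>: "push g \<phi> \<in> tensor_rel polyR N3 Mmod"
  shows "\<exists>E m. frag_clears i E \<phi> \<and> m \<in> carrier N1 \<and> f m = frag_lift N2 (loc_comp N2 i E) \<phi>"
proof -
  from eventually_conj[OF tensor_rel_MmodD[OF N3 g\<phi>] formal_sums_eventually_clears[OF \<phi>]]
  obtain E where E: "comp_vanishes N3 i E (push g \<phi>)" "frag_clears i E \<phi>"
    unfolding eventually_sequentially by blast
  have "frag_lift N2 (loc_comp N2 i E) \<phi> \<in> {y \<in> carrier N2. g y = \<zero>\<^bsub>N3\<^esub>}"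
    using E(1) frag_lift_loc_comp_push[OF N2 N3 g \<phi>]
      abelian_group.frag_lift_closed[OF module.axioms(2)[OF N2] loc_comp_closed[OF N2]]
    by (simp add: comp_vanishes_def)
  then obtain m where "m \<in> carrier N1" "f m = frag_lift N2 (loc_comp N2 i E) \<phi>"
    using ex unfolding exact_at_def by (metis (no_types, lifting) imageE)
  then show ?thesis using E(2) by blast
qed

lemma flat_lift:
  fixes N1 :: "('k::field pR, 'a) module" and N2 :: "('k pR, 'b) module" and N3 :: "('k pR, 'c) module"
  assumes N2: "module polyR N2" and f: "mod_hom polyR N1 N2 f"
    and \<phi>: "\<phi> \<in> formal_sums N2 Mmod"
    and E: "\<And>i. frag_clears i (E i) \<phi>" and m: "\<And>i. m i \<in> carrier N1"
    and fm: "\<And>i. f (m i) = frag_lift N2 (loc_comp N2 i (E i)) \<phi>"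
  defines "\<psi> \<equiv> \<Sum>j\<in>frag_indices \<phi>. frag_of (m j, inv_var_vec j (E j))"
  shows "\<psi> \<in> formal_sums N1 Mmod" and "\<phi> - push f \<psi> \<in> tensor_rel polyR N2 Mmod"
proof -
  interpret N2: module "polyR :: 'k pR ring" N2 by fact
  define I where "I = frag_indices \<phi>"
  have I: "finite I" unfolding I_def by (rule finite_frag_indices[OF \<phi>])
  have F: "\<And>p. loc_comp N2 i E p \<in> carrier N2" for i E by (rule loc_comp_closed[OF N2])
  show \<psi>: "\<psi> \<in> formal_sums N1 Mmod"
    unfolding formal_sums_def \<psi>_def
    using keys_sum[of "\<lambda>j. frag_of (m j, inv_var_vec j (E j))"] m inv_var_vec_carrier by fastforce
  have f\<psi>: "push f \<psi> = (\<Sum>j\<in>I. frag_of (f (m j), inv_var_vec j (E j)))"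
    unfolding \<psi>_def I_def by (simp add: push_sum)
  have keys: "p \<in> Poly_Mapping.keys \<phi> \<or> (\<exists>j\<in>I. p = (f (m j), inv_var_vec j (E j)))"
    if "p \<in> Poly_Mapping.keys (\<phi> - push f \<psi>)" for p
    using that keys_diff[of \<phi> "push f \<psi>"] keys_sum[of "\<lambda>j. frag_of (f (m j), inv_var_vec j (E j))" I]
    unfolding f\<psi> by auto
  show "\<phi> - push f \<psi> \<in> tensor_rel polyR N2 Mmod"
  proof (rule tensor_rel_MmodI[OF N2 formal_sums_diff[OF \<phi> push_formal_sums[OF \<psi>]]])
    show "f \<in> carrier N1 \<rightarrow> carrier N2" using mod_hom_closed[OF f] by blast
    fix i
    show "\<exists>E. comp_vanishes N2 i E (\<phi> - push f \<psi>)"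
    proof (cases "i \<in> I")
      case True
      have "frag_clears i (E i) (\<phi> - push f \<psi>)"
        using keys E[of i] clears_zero clears_inverse[of "var i ^ E i"]
        unfolding frag_clears_def by (fastforce simp: inv_var_vec_def)
      moreover have "frag_lift N2 (loc_comp N2 i (E i)) (push f \<psi>) = f (m i)"
      proof -
        have "frag_lift N2 (loc_comp N2 i (E i)) (push f \<psi>)
            = (\<Oplus>\<^bsub>N2\<^esub>j\<in>I. loc_comp N2 i (E i) (f (m j), inv_var_vec j (E j)))"
          unfolding f\<psi> by (simp add: N2.frag_lift_sum[OF F I] N2.frag_lift_of[OF F])
        also have "\<dots> = (\<Oplus>\<^bsub>N2\<^esub>j\<in>I. if i = j then f (m i) else \<zero>\<^bsub>N2\<^esub>)"
          using mod_hom_closed[OF f m]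
          by (intro N2.add.finprod_cong')
            (auto simp: loc_comp_inv_var_vec[OF N2] loc_comp_eq_zero[OF N2])
        also have "\<dots> = f (m i)"
          using N2.add.finprod_singleton[OF True I, of "\<lambda>_. f (m i)"] mod_hom_closed[OF f m] by simp
        finally show ?thesis .
      qed
      moreover have "frag_lift N2 (loc_comp N2 i (E i)) \<phi> \<in> carrier N2"
        by (rule N2.frag_lift_closed[OF F])
      ultimately have "comp_vanishes N2 i (E i) (\<phi> - push f \<psi>)"
        using fm[of i]
        by (simp add: comp_vanishes_def N2.frag_lift_diff[OF F] a_minus_def N2.r_neg)
      then show ?thesis ..
    next
      case False
      then have "snd p i = 0" if "p \<in> Poly_Mapping.keys (\<phi> - push f \<psi>)" for p
        using keys[OF that] unfolding I_def frag_indices_def by (auto simp: inv_var_vec_def)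
      then have "comp_vanishes N2 i 0 (\<phi> - push f \<psi>)"
        unfolding comp_vanishes_def frag_clears_def
        by (simp add: clears_zero N2.frag_lift_eq_zero loc_comp_eq_zero[OF N2])
      then show ?thesis ..
    qed
  qed
qed

lemma flat_push:
  fixes N1 :: "('k::field pR, 'a) module" and N2 :: "('k pR, 'b) module" and N3 :: "('k pR, 'c) module"
  assumes N3: "module polyR N3"
    and f: "mod_hom polyR N1 N2 f" and g: "mod_hom polyR N2 N3 g" and ex: "exact_at N1 N2 N3 f g"
    and \<psi>: "\<psi> \<in> formal_sums N1 Mmod" and rel: "\<phi> - push f \<psi> \<in> tensor_rel polyR N2 Mmod"
  shows "push g \<phi> \<in> tensor_rel polyR N3 Mmod"
proof -
  have "push (g \<circ> f) \<psi> \<in> tensor_rel polyR N3 Mmod"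
  proof (rule push_tensor_rel_if_zero[OF module.axioms(2)[OF N3]])
    fix p assume "p \<in> Poly_Mapping.keys \<psi>"
    then have "fst p \<in> carrier N1" "snd p \<in> carrier Mmod" using keys_formal_sums[OF \<psi>] by auto
    moreover from this(1) have "f (fst p) \<in> {y \<in> carrier N2. g y = \<zero>\<^bsub>N3\<^esub>}"
      using ex unfolding exact_at_def by blast
    ultimately show "(g \<circ> f) (fst p) = \<zero>\<^bsub>N3\<^esub> \<and> snd p \<in> carrier Mmod" by simp
  qed
  then have "push g (\<phi> - push f \<psi>) + push (g \<circ> f) \<psi> \<in> tensor_rel polyR N3 Mmod"
    by (intro tensor_rel_add push_tensor_rel[OF g rel])
  then show ?thesis by (simp add: push_diff push_comp)
qed

lemma flat_Mmod: "flat_mod (polyR :: 'k::field pR ring) Mmod TYPE('a) TYPE('b) TYPE('c)"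
  unfolding flat_mod_def
proof (intro conjI allI impI ballI)
  show "module (polyR :: 'k pR ring) Mmod" by (rule module_Mmod)
  fix N1 :: "('k pR, 'a) module" and N2 :: "('k pR, 'b) module" and N3 :: "('k pR, 'c) module" and f g \<phi>
  assume "module polyR N1 \<and> module polyR N2 \<and> module polyR N3 \<and> mod_hom polyR N1 N2 f
    \<and> mod_hom polyR N2 N3 g \<and> exact_at N1 N2 N3 f g"
  then have N2: "module polyR N2" and N3: "module polyR N3" and f: "mod_hom polyR N1 N2 f"
    and g: "mod_hom polyR N2 N3 g" and ex: "exact_at N1 N2 N3 f g" by auto
  assume \<phi>: "\<phi> \<in> formal_sums N2 Mmod"
  show "push g \<phi> \<in> tensor_rel polyR N3 Mmod \<longleftrightarrow> (\<exists>\<psi>\<in>formal_sums N1 Mmod. \<phi> - push f \<psi> \<in> tensor_rel polyR N2 Mmod)"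
  proof
    assume "push g \<phi> \<in> tensor_rel polyR N3 Mmod"
    then obtain E m where "\<And>i. frag_clears i (E i) \<phi>" "\<And>i. m i \<in> carrier N1"
      "\<And>i. f (m i) = frag_lift N2 (loc_comp N2 i (E i)) \<phi>"
      using flat_lift_components[OF N2 N3 g ex \<phi>] by metis
    from flat_lift[OF N2 f \<phi> this] show "\<exists>\<psi>\<in>formal_sums N1 Mmod. \<phi> - push f \<psi> \<in> tensor_rel polyR N2 Mmod" ..
  qed (use flat_push[OF N3 f g ex] in blast)
qed

text \<open>Division by \<open>x\<^sub>i\<^sup>E\<close> that drops the monomials not divisible by \<open>x\<^sub>i\<^sup>E\<close>; it is linear over the
  polynomials not involving \<open>x\<^sub>i\<close>.\<close>
definition var_pow_quot :: "nat \<Rightarrow> nat \<Rightarrow> ((nat \<Rightarrow>\<^sub>0 nat) \<Rightarrow>\<^sub>0 'a::zero) \<Rightarrow> (nat \<Rightarrow>\<^sub>0 nat) \<Rightarrow>\<^sub>0 'a" where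
  "var_pow_quot i E p = Abs_poly_mapping (\<lambda>\<mu>. Poly_Mapping.lookup p (\<mu> + Poly_Mapping.single i E))"

lemma lookup_var_pow_quot: "Poly_Mapping.lookup (var_pow_quot i E p) \<mu> = Poly_Mapping.lookup p (\<mu> + Poly_Mapping.single i E)"
proof -
  have "{\<mu>. Poly_Mapping.lookup p (\<mu> + Poly_Mapping.single i E) \<noteq> 0} = (\<lambda>\<mu>. \<mu> + Poly_Mapping.single i E) -` Poly_Mapping.keys p"
    by (auto simp: in_keys_iff)
  moreover have "finite ((\<lambda>\<mu>. \<mu> + Poly_Mapping.single i E) -` Poly_Mapping.keys p)"
    by (rule finite_vimageI) (auto simp: inj_def)
  ultimately show ?thesis unfolding var_pow_quot_def by (simp add: Abs_poly_mapping_inverse)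
qed

lemma var_pow_quot_add:
  "var_pow_quot i E (p + q) = var_pow_quot i E p + var_pow_quot i E (q :: _ \<Rightarrow>\<^sub>0 'a::monoid_add)"
  by (rule poly_mapping_eqI) (simp add: lookup_var_pow_quot lookup_add)

lemma var_pow_quot_zero[simp]: "var_pow_quot i E 0 = 0"
  by (rule poly_mapping_eqI) (simp add: lookup_var_pow_quot)

lemma var_pow_quot_sum:
  "var_pow_quot i E (sum f A) = (\<Sum>a\<in>A. var_pow_quot i E (f a :: _ \<Rightarrow>\<^sub>0 'a::comm_monoid_add))"
  by (induction A rule: infinite_finite_induct) (simp_all add: var_pow_quot_add)

lemma var_pow_quot_single:
  "var_pow_quot i E (Poly_Mapping.single \<gamma> c) =
     (if E \<le> Poly_Mapping.lookup \<gamma> i then Poly_Mapping.single (\<gamma> - Poly_Mapping.single i E) c else 0)"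
proof (rule poly_mapping_eqI)
  fix \<mu>
  show "Poly_Mapping.lookup (var_pow_quot i E (Poly_Mapping.single \<gamma> c)) \<mu> =
        Poly_Mapping.lookup (if E \<le> Poly_Mapping.lookup \<gamma> i then Poly_Mapping.single (\<gamma> - Poly_Mapping.single i E) c else 0) \<mu>"
  proof (cases "E \<le> Poly_Mapping.lookup \<gamma> i")
    case True
    have "\<gamma> = \<mu> + Poly_Mapping.single i E \<longleftrightarrow> \<gamma> - Poly_Mapping.single i E = \<mu>"
    proof
      assume "\<gamma> = \<mu> + Poly_Mapping.single i E" then show "\<gamma> - Poly_Mapping.single i E = \<mu>" by simp
    next
      assume h: "\<gamma> - Poly_Mapping.single i E = \<mu>"
      show "\<gamma> = \<mu> + Poly_Mapping.single i E"
        unfolding h[symmetric] using True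
        by (intro poly_mapping_eqI) (auto simp: lookup_add lookup_minus lookup_single when_def)
    qed
    then show ?thesis using True by (simp add: lookup_var_pow_quot lookup_single when_def)
  next
    case False
    have "\<gamma> \<noteq> \<mu> + Poly_Mapping.single i E"
    proof
      assume "\<gamma> = \<mu> + Poly_Mapping.single i E"
      then have "Poly_Mapping.lookup \<gamma> i = Poly_Mapping.lookup \<mu> i + E" by (simp add: lookup_add)
      then show False using False by simp
    qed
    then show ?thesis using False by (simp add: lookup_var_pow_quot lookup_single when_def)
  qed
qed

lemma poly_mapping_monomial_expansion:
  "finite K \<Longrightarrow> Poly_Mapping.keys p \<subseteq> K \<Longrightarrow>
    p = (\<Sum>\<mu>\<in>K. Poly_Mapping.single \<mu> (Poly_Mapping.lookup (p :: 'a \<Rightarrow>\<^sub>0 'b::comm_monoid_add) \<mu>))"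
proof -
  assume K: "finite K" "Poly_Mapping.keys p \<subseteq> K"
  show ?thesis
  proof (rule poly_mapping_eqI)
    fix \<nu>
    have "Poly_Mapping.lookup (\<Sum>\<mu>\<in>K. Poly_Mapping.single \<mu> (Poly_Mapping.lookup p \<mu>)) \<nu>
        = (\<Sum>\<mu>\<in>K. if \<mu> = \<nu> then Poly_Mapping.lookup p \<mu> else 0)"
      by (simp add: lookup_sum lookup_single when_def)
    also have "\<dots> = Poly_Mapping.lookup p \<nu>"
      using K by (auto simp: sum.delta' in_keys_iff)
    finally show "Poly_Mapping.lookup p \<nu> = Poly_Mapping.lookup (\<Sum>\<mu>\<in>K. Poly_Mapping.single \<mu> (Poly_Mapping.lookup p \<mu>)) \<nu>" by simp
  qed
qed

lemma var_pow_quot_single_mult: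
  assumes "Poly_Mapping.lookup \<beta> i = 0"
  shows "var_pow_quot i E (Poly_Mapping.single \<alpha> a * Poly_Mapping.single \<beta> b)
    = var_pow_quot i E (Poly_Mapping.single \<alpha> a) * Poly_Mapping.single \<beta> (b :: 'a::semiring_0)"
proof -
  have li: "Poly_Mapping.lookup (\<alpha> + \<beta>) i = Poly_Mapping.lookup \<alpha> i" using assms by (simp add: lookup_add)
  have eq: "\<alpha> + \<beta> - Poly_Mapping.single i E = \<alpha> - Poly_Mapping.single i E + \<beta>" if "E \<le> Poly_Mapping.lookup \<alpha> i"
    using that assms by (intro poly_mapping_eqI) (auto simp: lookup_add lookup_minus lookup_single when_def)
  show ?thesis by (simp add: mult_single var_pow_quot_single li eq)
qed

lemma var_pow_quot_mult_free:
  assumes q: "\<And>\<beta>. \<beta> \<in> Poly_Mapping.keys q \<Longrightarrow> Poly_Mapping.lookup \<beta> i = 0"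
  shows "var_pow_quot i E (p * q) = var_pow_quot i E p * (q :: (nat \<Rightarrow>\<^sub>0 nat) \<Rightarrow>\<^sub>0 'a::comm_semiring_0)"
proof -
  let ?P = "Poly_Mapping.keys p" and ?Q = "Poly_Mapping.keys q"
  have ep: "p = (\<Sum>\<alpha>\<in>?P. Poly_Mapping.single \<alpha> (Poly_Mapping.lookup p \<alpha>))" by (rule poly_mapping_monomial_expansion) auto
  have eq: "q = (\<Sum>\<beta>\<in>?Q. Poly_Mapping.single \<beta> (Poly_Mapping.lookup q \<beta>))" by (rule poly_mapping_monomial_expansion) auto
  have "var_pow_quot i E (p * q) = var_pow_quot i E ((\<Sum>\<alpha>\<in>?P. Poly_Mapping.single \<alpha> (Poly_Mapping.lookup p \<alpha>)) * (\<Sum>\<beta>\<in>?Q. Poly_Mapping.single \<beta> (Poly_Mapping.lookup q \<beta>)))"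
    using ep eq by simp
  also have "\<dots> = (\<Sum>\<alpha>\<in>?P. \<Sum>\<beta>\<in>?Q. var_pow_quot i E (Poly_Mapping.single \<alpha> (Poly_Mapping.lookup p \<alpha>) * Poly_Mapping.single \<beta> (Poly_Mapping.lookup q \<beta>)))"
    by (simp add: sum_product var_pow_quot_sum)
  also have "\<dots> = (\<Sum>\<alpha>\<in>?P. \<Sum>\<beta>\<in>?Q. var_pow_quot i E (Poly_Mapping.single \<alpha> (Poly_Mapping.lookup p \<alpha>)) * Poly_Mapping.single \<beta> (Poly_Mapping.lookup q \<beta>))"
    by (intro sum.cong refl var_pow_quot_single_mult q)
  also have "\<dots> = var_pow_quot i E (\<Sum>\<alpha>\<in>?P. Poly_Mapping.single \<alpha> (Poly_Mapping.lookup p \<alpha>)) * (\<Sum>\<beta>\<in>?Q. Poly_Mapping.single \<beta> (Poly_Mapping.lookup q \<beta>))"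
    by (simp add: sum_product var_pow_quot_sum)
  also have "\<dots> = var_pow_quot i E p * q" using ep eq by simp
  finally show ?thesis .
qed

lemma var_pow_quot_cancel: "var_pow_quot i E (var i ^ E * c) = (c :: 'k::field pR)"
proof -
  let ?s = "Poly_Mapping.single i E" and ?Q = "Poly_Mapping.keys c"
  have ec: "c = (\<Sum>\<beta>\<in>?Q. Poly_Mapping.single \<beta> (Poly_Mapping.lookup c \<beta>))" by (rule poly_mapping_monomial_expansion) auto
  have "var_pow_quot i E (var i ^ E * c) = var_pow_quot i E (Poly_Mapping.single ?s 1 * (\<Sum>\<beta>\<in>?Q. Poly_Mapping.single \<beta> (Poly_Mapping.lookup c \<beta>)))"
    using ec by (simp add: var_power)
  also have "\<dots> = (\<Sum>\<beta>\<in>?Q. var_pow_quot i E (Poly_Mapping.single (?s + \<beta>) (Poly_Mapping.lookup c \<beta>)))"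
    by (simp add: sum_distrib_left var_pow_quot_sum mult_single)
  also have "\<dots> = (\<Sum>\<beta>\<in>?Q. Poly_Mapping.single \<beta> (Poly_Mapping.lookup c \<beta>))"
    by (intro sum.cong refl) (simp add: var_pow_quot_single lookup_add)
  also have "\<dots> = c" using ec by simp
  finally show ?thesis .
qed

section \<open>Faithfulness on finitely presented modules\<close>

lemma exists_fresh_var:
  assumes "finite P"
  shows "\<exists>i. \<forall>p\<in>P. \<forall>\<mu>\<in>Poly_Mapping.keys (p :: (nat \<Rightarrow>\<^sub>0 'b::zero) \<Rightarrow>\<^sub>0 'c::zero). Poly_Mapping.lookup \<mu> i = 0"
proof -
  have "finite (\<Union>p\<in>P. \<Union>\<mu>\<in>Poly_Mapping.keys p. Poly_Mapping.keys \<mu>)"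
    using assms by (intro finite_UN_I finite_keys)
  then obtain i where "i \<notin> (\<Union>p\<in>P. \<Union>\<mu>\<in>Poly_Mapping.keys p. Poly_Mapping.keys \<mu>)"
    using ex_new_if_finite[OF infinite_UNIV_nat] by blast
  then show ?thesis by (auto simp: in_keys_iff)
qed

lemma var_pow_quot_combination:
  assumes free: "\<And>l \<mu>. l < m \<Longrightarrow> \<mu> \<in> Poly_Mapping.keys (k l) \<Longrightarrow> Poly_Mapping.lookup \<mu> i = 0"
    and c: "var i ^ E * c = (\<Sum>l<m. a l * k l)"
  shows "c = (\<Sum>l<m. var_pow_quot i E (a l) * (k l :: 'k::field pR))"
proof -
  have "c = var_pow_quot i E (\<Sum>l<m. a l * k l)" by (simp flip: c add: var_pow_quot_cancel)
  also have "\<dots> = (\<Sum>l<m. var_pow_quot i E (a l) * k l)"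
    by (simp add: var_pow_quot_sum) (intro sum.cong refl var_pow_quot_mult_free free, auto)
  finally show ?thesis .
qed

lemma fin_presented_var_torsion_eq_zero:
  fixes N :: "('k::field pR, 'b) module"
  assumes N: "module polyR N" and fp: "fin_presented polyR N" and y: "y \<in> carrier N"
    and tor: "\<And>i. \<exists>E. var i ^ E \<odot>\<^bsub>N\<^esub> y = \<zero>\<^bsub>N\<^esub>"
  shows "y = \<zero>\<^bsub>N\<^esub>"
proof -
  interpret module "polyR :: 'k pR ring" N by fact
  obtain n :: nat and gs and m :: nat and ks where gs: "gs \<in> {..<n} \<rightarrow> carrier N"
    and gen: "\<forall>y\<in>carrier N. \<exists>c. y = (\<Oplus>\<^bsub>N\<^esub>j\<in>{..<n}. c j \<odot>\<^bsub>N\<^esub> gs j)"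
    and ks: "\<forall>l<m. \<forall>j\<ge>n. ks l j = 0"
    and rels: "{c. (\<forall>j\<ge>n. c j = 0) \<and> (\<Oplus>\<^bsub>N\<^esub>j\<in>{..<n}. c j \<odot>\<^bsub>N\<^esub> gs j) = \<zero>\<^bsub>N\<^esub>}
      = range (\<lambda>a j. \<Sum>l<m. a l * ks l j)"
    using fp unfolding fin_presented_def by (auto simp: finsum_ring_of_type image_def)
  have "finite {ks l j | l j. l < m \<and> j < n}"
    by (rule finite_subset[of _ "(\<lambda>(l, j). ks l j) ` ({..<m} \<times> {..<n})"]) auto
  then obtain i where "\<forall>p\<in>{ks l j | l j. l < m \<and> j < n}. \<forall>\<mu>\<in>Poly_Mapping.keys p. Poly_Mapping.lookup \<mu> i = 0"
    by (blast dest: exists_fresh_var)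
  then have free: "Poly_Mapping.lookup \<mu> i = 0" if "l < m" "\<mu> \<in> Poly_Mapping.keys (ks l j)" for l j \<mu>
    using that ks by (cases "j < n") auto
  obtain c where yc: "y = (\<Oplus>\<^bsub>N\<^esub>j\<in>{..<n}. c j \<odot>\<^bsub>N\<^esub> gs j)" using gen y by blast
  obtain E where E: "var i ^ E \<odot>\<^bsub>N\<^esub> y = \<zero>\<^bsub>N\<^esub>" using tor by blast
  txt \<open>The coefficient vector of \<open>x\<^sub>i\<^sup>E y\<close> is a relation, hence a combination of the \<open>ks l\<close>; these do
    not involve \<open>x\<^sub>i\<close>, so dividing the combination by \<open>x\<^sub>i\<^sup>E\<close> gives a relation with coefficients \<open>c\<close>.\<close>
  have "(\<Oplus>\<^bsub>N\<^esub>j\<in>{..<n}. (var i ^ E * c j) \<odot>\<^bsub>N\<^esub> gs j) = var i ^ E \<odot>\<^bsub>N\<^esub> y"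
    unfolding yc using gs smult_assoc1[simplified]
    by (subst finsum_smult_ldistr) (auto intro!: finsum_cong' simp: Pi_iff)
  moreover have "(\<Oplus>\<^bsub>N\<^esub>j\<in>{..<n}. (if j < n then var i ^ E * c j else 0) \<odot>\<^bsub>N\<^esub> gs j)
      = (\<Oplus>\<^bsub>N\<^esub>j\<in>{..<n}. (var i ^ E * c j) \<odot>\<^bsub>N\<^esub> gs j)"
    using gs by (intro finsum_cong') (auto simp: Pi_iff)
  ultimately have "(\<lambda>j. if j < n then var i ^ E * c j else 0) \<in> range (\<lambda>a j. \<Sum>l<m. a l * ks l j)"
    using E by (simp flip: rels)
  then obtain a where a: "\<And>j. j < n \<Longrightarrow> var i ^ E * c j = (\<Sum>l<m. a l * ks l j)"
    by (auto simp: fun_eq_iff) metis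
  have "(\<lambda>j. \<Sum>l<m. var_pow_quot i E (a l) * ks l j) \<in> range (\<lambda>a j. \<Sum>l<m. a l * ks l j)"
    using rangeI[of "\<lambda>a j. \<Sum>l<m. a l * ks l j" "\<lambda>l. var_pow_quot i E (a l)"] by simp
  then have "(\<Oplus>\<^bsub>N\<^esub>j\<in>{..<n}. (\<Sum>l<m. var_pow_quot i E (a l) * ks l j) \<odot>\<^bsub>N\<^esub> gs j) = \<zero>\<^bsub>N\<^esub>"
    by (simp flip: rels)
  moreover have "(\<Oplus>\<^bsub>N\<^esub>j\<in>{..<n}. (\<Sum>l<m. var_pow_quot i E (a l) * ks l j) \<odot>\<^bsub>N\<^esub> gs j) = y"
    unfolding yc using gs var_pow_quot_combination[OF free a]
    by (intro finsum_cong') auto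
  ultimately show ?thesis by simp
qed

lemma tensor_rel_Mmod_var_torsion:
  assumes N: "module (polyR :: 'k::field pR ring) N" and a: "a \<in> carrier N" and b: "b \<in> carrier N"
    and rel: "frag_of (a, inv_var_vec i 0) - frag_of (b, inv_var_vec i 0) \<in> tensor_rel polyR N Mmod"
  shows "\<exists>E. var i ^ E \<odot>\<^bsub>N\<^esub> (a \<ominus>\<^bsub>N\<^esub> b) = \<zero>\<^bsub>N\<^esub>"
proof -
  interpret module "polyR :: 'k pR ring" N by fact
  have F: "\<And>p. loc_comp N i E p \<in> carrier N" for E by (rule loc_comp_closed[OF N])
  obtain E where "comp_vanishes N i E (frag_of (a, inv_var_vec i 0) - frag_of (b, inv_var_vec i 0))"
    using eventually_happens'[OF sequentially_bot tensor_rel_MmodD[OF N rel]] by blast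
  then have "loc_comp N i E (a, inv_var_vec i 0) \<ominus>\<^bsub>N\<^esub> loc_comp N i E (b, inv_var_vec i 0) = \<zero>\<^bsub>N\<^esub>"
    by (simp add: comp_vanishes_def frag_lift_diff[OF F] frag_lift_of[OF F])
  moreover have "inv_var_vec i 0 i = (1 :: 'k pR fract)"
    by (simp add: inv_var_vec_def One_fract_def)
  ultimately show ?thesis
    using a b by (auto simp: loc_comp_pair a_minus_def smult_r_distr smult_r_minus)
qed

lemma fp_faithful_Mmod:
  "tensor_faithful_on (polyR :: 'k::field pR ring) Mmod
     (\<lambda>N :: ('k pR, 'a) module. fin_presented polyR N) (\<lambda>N' :: ('k pR, 'b) module. fin_presented polyR N')"
  unfolding tensor_faithful_on_def
proof (intro allI impI ballI)
  fix N :: "('k pR, 'a) module" and N' :: "('k pR, 'b) module" and f g x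
  assume "module polyR N \<and> module polyR N' \<and> fin_presented polyR N \<and> fin_presented polyR N' \<and>
       mod_hom polyR N N' f \<and> mod_hom polyR N N' g \<and>
       (\<forall>\<phi>\<in>formal_sums N Mmod. push f \<phi> - push g \<phi> \<in> tensor_rel polyR N' Mmod)"
  then have N': "module polyR N'" and fp: "fin_presented polyR N'"
    and f: "mod_hom polyR N N' f" and g: "mod_hom polyR N N' g"
    and fg: "\<And>\<phi>. \<phi> \<in> formal_sums N Mmod \<Longrightarrow> push f \<phi> - push g \<phi> \<in> tensor_rel polyR N' Mmod"
    by auto
  interpret N': module "polyR :: 'k pR ring" N' by fact
  assume x: "x \<in> carrier N"
  have fx: "f x \<in> carrier N'" and gx: "g x \<in> carrier N'"
    using mod_hom_closed[OF f x] mod_hom_closed[OF g x] .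
  have "f x \<ominus>\<^bsub>N'\<^esub> g x = \<zero>\<^bsub>N'\<^esub>"
  proof (rule fin_presented_var_torsion_eq_zero[OF N' fp])
    fix i
    have "frag_of (x, inv_var_vec i 0) \<in> formal_sums N Mmod"
      using x inv_var_vec_carrier unfolding formal_sums_def by simp
    from fg[OF this] show "\<exists>E. var i ^ E \<odot>\<^bsub>N'\<^esub> (f x \<ominus>\<^bsub>N'\<^esub> g x) = \<zero>\<^bsub>N'\<^esub>"
      by (intro tensor_rel_Mmod_var_torsion[OF N' fx gx]) simp
  qed (use fx gx in simp)
  moreover have "(f x \<ominus>\<^bsub>N'\<^esub> g x) \<oplus>\<^bsub>N'\<^esub> g x = f x"
    using fx gx by (simp add: a_minus_def N'.add.m_assoc N'.l_neg)
  ultimately show "f x = g x" using gx by simp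
qed

lemma fp_faithfully_flat_Mmod: "fp_faithfully_flat (polyR :: ('k::field) pR ring) Mmod TYPE('a) TYPE('b) TYPE('c)"
  unfolding fp_faithfully_flat_def using flat_Mmod fp_faithful_Mmod by blast

section \<open>The residue field \<open>R/\<mathfrak>m\<close>\<close>

lemma quot_module_simps [simp]:
  "carrier (quot_module R I) = carrier (R Quot I)"
  "monoid.mult (quot_module R I) = monoid.mult (R Quot I)"
  "monoid.one (quot_module R I) = monoid.one (R Quot I)"
  "ring.zero (quot_module R I) = ring.zero (R Quot I)"
  "ring.add (quot_module R I) = ring.add (R Quot I)"
  "module.smult (quot_module R I) = (\<lambda>s C. monoid.mult (R Quot I) (a_r_coset R I s) C)"
  by (simp_all add: quot_module_def)

lemma module_quot:
  assumes R: "cring R" and I: "ideal I R"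
  shows "module R (quot_module R I)"
proof -
  interpret cring R by fact
  interpret ideal I R by fact
  interpret Q: cring "R Quot I" by (rule quotient_is_cring[OF R])
  have h: "a_r_coset R I \<in> ring_hom R (R Quot I)" by (rule rcos_ring_hom)
  have hc: "I +>\<^bsub>R\<^esub> a \<in> carrier (R Quot I)" if "a \<in> carrier R" for a using ring_hom_closed[OF h that] .
  have ab: "abelian_group (quot_module R I)"
  proof (rule abelian_groupI)
    fix x assume "x \<in> carrier (quot_module R I)"
    then show "\<exists>y\<in>carrier (quot_module R I). y \<oplus>\<^bsub>quot_module R I\<^esub> x = \<zero>\<^bsub>quot_module R I\<^esub>"
      using Q.l_neg Q.a_inv_closed by (metis quot_module_simps(1,4,5))
  qed (simp_all add: Q.a_ac)
  show ?thesis
  proof (rule moduleI[OF R ab])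
    fix a x assume "a \<in> carrier R" "x \<in> carrier (quot_module R I)"
    then show "a \<odot>\<^bsub>quot_module R I\<^esub> x \<in> carrier (quot_module R I)" using hc by simp
  next
    fix a b x assume a: "a \<in> carrier R" "b \<in> carrier R" "x \<in> carrier (quot_module R I)"
    then show "(a \<oplus>\<^bsub>R\<^esub> b) \<odot>\<^bsub>quot_module R I\<^esub> x = a \<odot>\<^bsub>quot_module R I\<^esub> x \<oplus>\<^bsub>quot_module R I\<^esub> b \<odot>\<^bsub>quot_module R I\<^esub> x"
      using hc ring_hom_add[OF h a(1) a(2)] by (simp add: Q.l_distr)
  next
    fix a x y assume a: "a \<in> carrier R" "x \<in> carrier (quot_module R I)" "y \<in> carrier (quot_module R I)"
    then show "a \<odot>\<^bsub>quot_module R I\<^esub> (x \<oplus>\<^bsub>quot_module R I\<^esub> y) = a \<odot>\<^bsub>quot_module R I\<^esub> x \<oplus>\<^bsub>quot_module R I\<^esub> a \<odot>\<^bsub>quot_module R I\<^esub> y"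
      using hc by (simp add: Q.r_distr)
  next
    fix a b x assume a: "a \<in> carrier R" "b \<in> carrier R" "x \<in> carrier (quot_module R I)"
    then show "(a \<otimes>\<^bsub>R\<^esub> b) \<odot>\<^bsub>quot_module R I\<^esub> x = a \<odot>\<^bsub>quot_module R I\<^esub> (b \<odot>\<^bsub>quot_module R I\<^esub> x)"
      using hc ring_hom_mult[OF h a(1) a(2)] by (simp add: Q.m_assoc)
  next
    fix x assume "x \<in> carrier (quot_module R I)"
    then show "\<one>\<^bsub>R\<^esub> \<odot>\<^bsub>quot_module R I\<^esub> x = x"
      using ring_hom_one[OF h] by simp
  qed
qed

definition no_const_term :: "'k::field pR set" where "no_const_term = {p. Poly_Mapping.lookup p 0 = 0}"

lemma no_const_term_mult: "Poly_Mapping.lookup (a::'k::field pR) 0 = 0 \<Longrightarrow> Poly_Mapping.lookup (x * a) 0 = 0"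
proof (rule ccontr)
  assume a: "Poly_Mapping.lookup a 0 = 0" and n: "Poly_Mapping.lookup (x * a) 0 \<noteq> 0"
  then have "0 \<in> Poly_Mapping.keys (x * a)" by (simp add: in_keys_iff)
  then obtain \<alpha> \<beta> :: "nat \<Rightarrow>\<^sub>0 nat" where "0 = \<alpha> + \<beta>" "\<beta> \<in> Poly_Mapping.keys a" using keys_mult[of x a] by blast
  moreover have "\<beta> = 0"
  proof (rule poly_mapping_eqI)
    fix k
    have "Poly_Mapping.lookup (0::nat \<Rightarrow>\<^sub>0 nat) k = Poly_Mapping.lookup (\<alpha> + \<beta>) k" using \<open>0 = \<alpha> + \<beta>\<close> by simp
    then show "Poly_Mapping.lookup \<beta> k = Poly_Mapping.lookup 0 k" by (simp add: lookup_add)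
  qed
  ultimately show False using a by (simp add: in_keys_iff)
qed

lemma no_const_term_mult_right: "Poly_Mapping.lookup (a::'k::field pR) 0 = 0 \<Longrightarrow> Poly_Mapping.lookup (a * x) 0 = 0"
  by (subst mult.commute) (rule no_const_term_mult)

lemma ideal_no_const_term: "ideal (no_const_term :: 'k::field pR set) polyR"
proof -
  interpret cring "polyR :: 'k pR ring" by (rule cring_ring_of_type)
  show ?thesis
  proof (rule idealI)
    show "ring (polyR :: 'k pR ring)" by (rule ring_axioms)
    show "subgroup no_const_term (add_monoid (polyR :: 'k pR ring))"
      by (rule add.subgroupI) (auto simp: no_const_term_def lookup_add intro!: exI[of _ "0::'k pR"])
  qed (auto simp: no_const_term_def no_const_term_mult no_const_term_mult_right)
qed

lemma max_ideal_subset_no_const_term: "max_ideal \<subseteq> (no_const_term :: 'k::field pR set)"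
proof -
  interpret cring "polyR :: 'k pR ring" by (rule cring_ring_of_type)
  show ?thesis unfolding max_ideal_def
  proof (rule genideal_minimal[OF ideal_no_const_term])
    show "range var \<subseteq> (no_const_term :: 'k pR set)"
    proof
      fix p assume "p \<in> range (var :: nat \<Rightarrow> 'k pR)"
      then obtain i where p: "p = var i" by blast
      have "Poly_Mapping.single i (1::nat) \<noteq> 0"
        by (metis lookup_single_eq lookup_zero one_neq_zero)
      then show "p \<in> no_const_term" unfolding p no_const_term_def var_def by (simp add: lookup_single when_def)
    qed
  qed
qed

lemma one_notin_max_ideal: "(1 :: 'k::field pR) \<notin> max_ideal"
  using max_ideal_subset_no_const_term by (auto simp: no_const_term_def)

lemma ideal_max_ideal: "ideal (max_ideal :: 'k::field pR set) polyR"
proof -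
  interpret cring "polyR :: 'k pR ring" by (rule cring_ring_of_type)
  show ?thesis unfolding max_ideal_def by (rule genideal_ideal) simp
qed

lemma var_in_max_ideal: "var i \<in> (max_ideal :: 'k::field pR set)"
proof -
  interpret cring "polyR :: 'k pR ring" by (rule cring_ring_of_type)
  show ?thesis unfolding max_ideal_def using genideal_self[of "range var"] by auto
qed

lemma module_quot_max_ideal: "module (polyR :: 'k::field pR ring) (quot_module polyR max_ideal)"
  by (rule module_quot[OF cring_ring_of_type ideal_max_ideal])

lemma FactRing_zero: "\<zero>\<^bsub>R Quot I\<^esub> = I"
  by (simp add: FactRing_def)

lemma quot_max_ideal_nontrivial: "carrier (quot_module (polyR :: 'k::field pR ring) max_ideal) \<noteq> {max_ideal}"
proof
  interpret ideal "max_ideal :: 'k pR set" "polyR :: 'k pR ring" by (rule ideal_max_ideal)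
  assume c: "carrier (quot_module (polyR :: 'k::field pR ring) max_ideal) = {max_ideal}"
  have "max_ideal +>\<^bsub>polyR\<^esub> 1 \<in> carrier (polyR Quot (max_ideal :: 'k pR set))"
    using ring_hom_closed[OF rcos_ring_hom, of 1] by simp
  then have "max_ideal +>\<^bsub>polyR\<^esub> 1 = (max_ideal :: 'k pR set)" using c by simp
  moreover have "(1 :: 'k pR) \<in> max_ideal +>\<^bsub>polyR\<^esub> 1" by (rule a_rcos_self) simp
  ultimately show False using one_notin_max_ideal by auto
qed

lemma formal_sums_Mmod_subset_tensor_rel:
  assumes N: "module (polyR :: 'k::field pR ring) N"
    and kill: "\<And>i n. n \<in> carrier N \<Longrightarrow> var i \<odot>\<^bsub>N\<^esub> n = \<zero>\<^bsub>N\<^esub>"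
  shows "formal_sums N Mmod \<subseteq> tensor_rel polyR N Mmod"
proof
  interpret module "polyR :: 'k pR ring" N by fact
  fix \<phi> assume \<phi>: "\<phi> \<in> formal_sums N Mmod"
  show "\<phi> \<in> tensor_rel polyR N Mmod"
  proof (rule tensor_rel_MmodI[OF N \<phi>])
    fix i
    obtain E where E: "frag_clears i E \<phi>"
      using eventually_happens'[OF sequentially_bot formal_sums_eventually_clears[OF \<phi>]] by blast
    have "comp_vanishes N i (Suc E) \<phi>"
      unfolding comp_vanishes_def
    proof (intro conjI frag_lift_eq_zero)
      show "frag_clears i (Suc E) \<phi>"
        using E clears_mult[of "var i ^ E" _ "var i"] unfolding frag_clears_def power_Suc by blast
      fix p assume p: "p \<in> Poly_Mapping.keys \<phi>"
      then have c: "clears (var i ^ E) (snd p i)" and n: "fst p \<in> carrier N"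
        using E keys_formal_sums[OF \<phi>] unfolding frag_clears_def by auto
      have "cleared (var i ^ Suc E) (snd p i) = cleared (var i ^ E) (snd p i) * var i"
        using cleared_mult[OF c, of "var i"] by (simp only: power_Suc mult.commute)
      then have "loc_comp N i (Suc E) p = (cleared (var i ^ E) (snd p i) * var i) \<odot>\<^bsub>N\<^esub> fst p"
        using n by (simp add: loc_comp_def)
      then show "loc_comp N i (Suc E) p = \<zero>\<^bsub>N\<^esub>"
        using n by (simp add: smult_assoc1[simplified] kill)
    qed
    then show "\<exists>E. comp_vanishes N i E \<phi>" ..
  qed
qed

lemma quot_max_ideal_var_smult:
  assumes "C \<in> carrier (quot_module (polyR :: 'k::field pR ring) max_ideal)"
  shows "var i \<odot>\<^bsub>quot_module polyR max_ideal\<^esub> C = \<zero>\<^bsub>quot_module polyR max_ideal\<^esub>"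
proof -
  interpret ideal "max_ideal :: 'k pR set" "polyR :: 'k pR ring" by (rule ideal_max_ideal)
  interpret Q: cring "polyR Quot (max_ideal :: 'k pR set)" by (rule quotient_is_cring[OF cring_ring_of_type])
  have "var i \<odot>\<^bsub>quot_module polyR max_ideal\<^esub> C = max_ideal \<otimes>\<^bsub>polyR Quot max_ideal\<^esub> C"
    using a_rcos_const[OF var_in_max_ideal] by simp
  also have "\<dots> = \<zero>\<^bsub>polyR Quot max_ideal\<^esub>"
    using Q.l_null assms by (simp add: FactRing_zero)
  finally show ?thesis by simp
qed

lemma not_faithfully_flat_Mmod: "\<not> faithfully_flat (polyR :: 'k::field pR ring) Mmod TYPE('k pR set) TYPE('k pR set) TYPE('k pR set)"
proof
  assume "faithfully_flat (polyR :: 'k::field pR ring) Mmod TYPE('k pR set) TYPE('k pR set) TYPE('k pR set)"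
  then have tf: "tensor_faithful_on (polyR :: 'k::field pR ring) Mmod (\<lambda>N::('k pR,'k pR set) module. True) (\<lambda>N'::('k pR,'k pR set) module. True)"
    unfolding faithfully_flat_def by blast
  let ?Q = "quot_module (polyR :: 'k::field pR ring) max_ideal"
  interpret QM: module "polyR :: 'k pR ring" ?Q by (rule module_quot_max_ideal)
  interpret ideal "max_ideal :: 'k pR set" "polyR :: 'k pR ring" by (rule ideal_max_ideal)
  have id_hom: "mod_hom polyR ?Q ?Q id" unfolding mod_hom_def by simp
  have zero_hom: "mod_hom polyR ?Q ?Q (\<lambda>_. \<zero>\<^bsub>?Q\<^esub>)" unfolding mod_hom_def
    by (auto simp del: quot_module_simps)
  have tensor_eq: "\<forall>\<phi>\<in>formal_sums ?Q Mmod. push id \<phi> - push (\<lambda>_. \<zero>\<^bsub>?Q\<^esub>) \<phi> \<in> tensor_rel polyR ?Q Mmod"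
  proof
    fix \<phi> assume \<phi>: "\<phi> \<in> formal_sums ?Q Mmod"
    have "push id \<phi> \<in> formal_sums ?Q Mmod" "push (\<lambda>_. \<zero>\<^bsub>?Q\<^esub>) \<phi> \<in> formal_sums ?Q Mmod"
      by (rule push_formal_sums[OF \<phi>], simp, rule push_formal_sums[OF \<phi>], simp del: quot_module_simps)
    then show "push id \<phi> - push (\<lambda>_. \<zero>\<^bsub>?Q\<^esub>) \<phi> \<in> tensor_rel polyR ?Q Mmod"
      using formal_sums_Mmod_subset_tensor_rel[OF module_quot_max_ideal quot_max_ideal_var_smult]
      by (intro tensor_rel_diff) auto
  qed
  have x: "max_ideal +>\<^bsub>polyR\<^esub> 1 \<in> carrier ?Q"
    using ring_hom_closed[OF rcos_ring_hom, of 1] by simp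
  have "id (max_ideal +>\<^bsub>polyR\<^esub> 1) = \<zero>\<^bsub>?Q\<^esub>"
    using tf id_hom zero_hom tensor_eq x QM.module_axioms unfolding tensor_faithful_on_def by blast
  then have "max_ideal +>\<^bsub>polyR\<^esub> 1 = (max_ideal :: 'k pR set)" by (simp add: FactRing_zero)
  moreover have "(1 :: 'k pR) \<in> max_ideal +>\<^bsub>polyR\<^esub> 1" by (rule a_rcos_self) simp
  ultimately show False using one_notin_max_ideal by auto
qed

theorem mainTheorem14:
  shows "fp_faithfully_flat (polyR :: ('k::field) pR ring) Mmod TYPE('a) TYPE('b) TYPE('c)
       \<and> \<not> faithfully_flat (polyR :: 'k pR ring) Mmod TYPE('k pR set) TYPE('k pR set) TYPE('k pR set)
       \<and> carrier (quot_module (polyR :: 'k pR ring) max_ideal) \<noteq> {max_ideal}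
       \<and> formal_sums (quot_module (polyR :: 'k pR ring) max_ideal) Mmod
           \<subseteq> tensor_rel (polyR :: 'k pR ring) (quot_module polyR max_ideal) Mmod"
  using fp_faithfully_flat_Mmod not_faithfully_flat_Mmod quot_max_ideal_nontrivial
    formal_sums_Mmod_subset_tensor_rel[OF module_quot_max_ideal quot_max_ideal_var_smult]
  by blast

end
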